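(* Let $H$ be a finite-dimensional Hopf algebra over a field $\Bbbk$ (algebraically closed of characteristic zero) and $A$ a Hopf subalgebra of $H$. Suppose $H=A\oplus C$ as coalgebras for some subcoalgebra $C$ of $H$. Then $H$ and $A$ have the same distinguished group-like element.
   Context: The distinguished group-like element of a finite-dimensional Hopf algebra $H$ is the $a\in G(H)$ with $\lambda(h_2)h_1=\lambda(h)\,a$ for all $h\in H$, where $\lambda$ is a nonzero right integral of $H^*$. *)

theory Defs
  imports "HOL-Computational_Algebra.Polynomial"
begin

text \<open>A finite-dimensional Hopf algebra over a field 'k is presented by a finite basis
  indexed by the finite type 'i together with its structure constants. Elements of H are
  coordinate vectors 'i \<Rightarrow> 'k, elements of H\<otimes>H are 'i \<times> 'i \<Rightarrow> 'k, and
  elements of H\<otimes>H\<otimes>H are 'i \<times> 'i \<times> 'i \<Rightarrow> 'k.\<close>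

record ('i, 'k) hopf_data =
  mc :: "'i \<Rightarrow> 'i \<Rightarrow> 'i \<Rightarrow> 'k"   \<comment> \<open>e_i e_j = sum_l mc i j l e_l\<close>
  uc :: "'i \<Rightarrow> 'k"                \<comment> \<open>1 = sum_i uc i e_i\<close>
  cc :: "'i \<Rightarrow> 'i \<Rightarrow> 'i \<Rightarrow> 'k"   \<comment> \<open>Delta e_l = sum_{i,j} cc l i j e_i \<otimes> e_j\<close>
  ec :: "'i \<Rightarrow> 'k"                \<comment> \<open>epsilon e_l = ec l\<close>
  sc :: "'i \<Rightarrow> 'i \<Rightarrow> 'k"         \<comment> \<open>S e_i = sum_j sc i j e_j\<close>

type_synonym ('i, 'k) vec = "'i \<Rightarrow> 'k"

definition bvec :: "'i \<Rightarrow> 'i \<Rightarrow> 'k::field" where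
  "bvec i = (\<lambda>j. if j = i then 1 else 0)"

definition vadd :: "('i \<Rightarrow> 'k::field) \<Rightarrow> ('i \<Rightarrow> 'k) \<Rightarrow> 'i \<Rightarrow> 'k" where
  "vadd x y = (\<lambda>i. x i + y i)"

definition vscale :: "'k::field \<Rightarrow> ('i \<Rightarrow> 'k) \<Rightarrow> 'i \<Rightarrow> 'k" where
  "vscale c x = (\<lambda>i. c * x i)"

definition hmul :: "('i::finite, 'k::field) hopf_data \<Rightarrow> ('i \<Rightarrow> 'k) \<Rightarrow> ('i \<Rightarrow> 'k) \<Rightarrow> 'i \<Rightarrow> 'k" where
  "hmul H x y = (\<lambda>l. \<Sum>i\<in>UNIV. \<Sum>j\<in>UNIV. x i * y j * mc H i j l)"

definition hone :: "('i::finite, 'k::field) hopf_data \<Rightarrow> 'i \<Rightarrow> 'k" where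
  "hone H = uc H"

definition hcomul :: "('i::finite, 'k::field) hopf_data \<Rightarrow> ('i \<Rightarrow> 'k) \<Rightarrow> 'i \<times> 'i \<Rightarrow> 'k" where
  "hcomul H x = (\<lambda>(i, j). \<Sum>l\<in>UNIV. x l * cc H l i j)"

definition hcounit :: "('i::finite, 'k::field) hopf_data \<Rightarrow> ('i \<Rightarrow> 'k) \<Rightarrow> 'k" where
  "hcounit H x = (\<Sum>l\<in>UNIV. x l * ec H l)"

definition hanti :: "('i::finite, 'k::field) hopf_data \<Rightarrow> ('i \<Rightarrow> 'k) \<Rightarrow> 'i \<Rightarrow> 'k" where
  "hanti H x = (\<lambda>j. \<Sum>i\<in>UNIV. x i * sc H i j)"

definition tens :: "('i \<Rightarrow> 'k::field) \<Rightarrow> ('i \<Rightarrow> 'k) \<Rightarrow> 'i \<times> 'i \<Rightarrow> 'k" where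
  "tens x y = (\<lambda>(i, j). x i * y j)"

definition tmul :: "('i::finite, 'k::field) hopf_data \<Rightarrow> ('i \<times> 'i \<Rightarrow> 'k) \<Rightarrow> ('i \<times> 'i \<Rightarrow> 'k) \<Rightarrow> 'i \<times> 'i \<Rightarrow> 'k" where
  "tmul H t u = (\<lambda>(i, j). \<Sum>(p, q)\<in>UNIV. \<Sum>(r, s)\<in>UNIV.
      t (p, q) * u (r, s) * mc H p r i * mc H q s j)"

definition comul_id :: "('i::finite, 'k::field) hopf_data \<Rightarrow> ('i \<times> 'i \<Rightarrow> 'k) \<Rightarrow> 'i \<times> 'i \<times> 'i \<Rightarrow> 'k" where
  "comul_id H t = (\<lambda>(i, j, l). \<Sum>p\<in>UNIV. t (p, l) * cc H p i j)"

definition id_comul :: "('i::finite, 'k::field) hopf_data \<Rightarrow> ('i \<times> 'i \<Rightarrow> 'k) \<Rightarrow> 'i \<times> 'i \<times> 'i \<Rightarrow> 'k" where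
  "id_comul H t = (\<lambda>(i, j, l). \<Sum>p\<in>UNIV. t (i, p) * cc H p j l)"

text \<open>(f \<otimes> id) and (id \<otimes> f) for a linear functional f given by its values on the basis\<close>
definition fun_id :: "('i::finite \<Rightarrow> 'k::field) \<Rightarrow> ('i \<times> 'i \<Rightarrow> 'k) \<Rightarrow> 'i \<Rightarrow> 'k" where
  "fun_id f t = (\<lambda>j. \<Sum>i\<in>UNIV. f i * t (i, j))"

definition id_fun :: "('i::finite \<Rightarrow> 'k::field) \<Rightarrow> ('i \<times> 'i \<Rightarrow> 'k) \<Rightarrow> 'i \<Rightarrow> 'k" where
  "id_fun f t = (\<lambda>i. \<Sum>j\<in>UNIV. t (i, j) * f j)"

definition mul_S_id :: "('i::finite, 'k::field) hopf_data \<Rightarrow> ('i \<times> 'i \<Rightarrow> 'k) \<Rightarrow> 'i \<Rightarrow> 'k" where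
  "mul_S_id H t = (\<lambda>l. \<Sum>(i, j)\<in>UNIV. t (i, j) * hmul H (hanti H (bvec i)) (bvec j) l)"

definition mul_id_S :: "('i::finite, 'k::field) hopf_data \<Rightarrow> ('i \<times> 'i \<Rightarrow> 'k) \<Rightarrow> 'i \<Rightarrow> 'k" where
  "mul_id_S H t = (\<lambda>l. \<Sum>(i, j)\<in>UNIV. t (i, j) * hmul H (bvec i) (hanti H (bvec j)) l)"

definition fval :: "('i::finite \<Rightarrow> 'k::field) \<Rightarrow> ('i \<Rightarrow> 'k) \<Rightarrow> 'k" where
  "fval f x = (\<Sum>i\<in>UNIV. f i * x i)"

definition is_hopf :: "('i::finite, 'k::field) hopf_data \<Rightarrow> bool" where
  "is_hopf H \<longleftrightarrow>
     (\<forall>x y z. hmul H (hmul H x y) z = hmul H x (hmul H y z)) \<and>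
     (\<forall>x. hmul H (hone H) x = x \<and> hmul H x (hone H) = x) \<and>
     (\<forall>x. comul_id H (hcomul H x) = id_comul H (hcomul H x)) \<and>
     (\<forall>x. fun_id (ec H) (hcomul H x) = x \<and> id_fun (ec H) (hcomul H x) = x) \<and>
     (\<forall>x y. hcomul H (hmul H x y) = tmul H (hcomul H x) (hcomul H y)) \<and>
     hcomul H (hone H) = tens (hone H) (hone H) \<and>
     (\<forall>x y. hcounit H (hmul H x y) = hcounit H x * hcounit H y) \<and>
     hcounit H (hone H) = 1 \<and>
     (\<forall>x. mul_S_id H (hcomul H x) = vscale (hcounit H x) (hone H)) \<and>
     (\<forall>x. mul_id_S H (hcomul H x) = vscale (hcounit H x) (hone H))"

definition is_subspace :: "('i \<Rightarrow> 'k::field) set \<Rightarrow> bool" where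
  "is_subspace A \<longleftrightarrow> (\<lambda>i. 0) \<in> A \<and> (\<forall>x\<in>A. \<forall>y\<in>A. vadd x y \<in> A) \<and> (\<forall>c. \<forall>x\<in>A. vscale c x \<in> A)"

text \<open>A \<otimes> A as a subspace of H \<otimes> H (A a subspace): sums of pure tensors a \<otimes> b with a, b \<in> A\<close>
definition tensor_sub :: "('i \<Rightarrow> 'k::field) set \<Rightarrow> ('i \<times> 'i \<Rightarrow> 'k) set" where
  "tensor_sub A = {t. \<exists>(n::nat) a b. (\<forall>k<n. a k \<in> A \<and> b k \<in> A) \<and>
                       t = (\<lambda>(i, j). \<Sum>k<n. a k i * b k j)}"

definition hopf_subalgebra :: "('i::finite, 'k::field) hopf_data \<Rightarrow> ('i \<Rightarrow> 'k) set \<Rightarrow> bool" where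
  "hopf_subalgebra H A \<longleftrightarrow> is_subspace A \<and> hone H \<in> A \<and>
     (\<forall>x\<in>A. \<forall>y\<in>A. hmul H x y \<in> A) \<and>
     (\<forall>x\<in>A. hcomul H x \<in> tensor_sub A) \<and> (\<forall>x\<in>A. hanti H x \<in> A)"

definition subcoalgebra :: "('i::finite, 'k::field) hopf_data \<Rightarrow> ('i \<Rightarrow> 'k) set \<Rightarrow> bool" where
  "subcoalgebra H C \<longleftrightarrow> is_subspace C \<and> (\<forall>x\<in>C. hcomul H x \<in> tensor_sub C)"

text \<open>group-like elements of the Hopf subalgebra A (A = UNIV gives G(H))\<close>
definition grouplike :: "('i::finite, 'k::field) hopf_data \<Rightarrow> ('i \<Rightarrow> 'k) set \<Rightarrow> ('i \<Rightarrow> 'k) \<Rightarrow> bool" where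
  "grouplike H A g \<longleftrightarrow> g \<in> A \<and> g \<noteq> (\<lambda>i. 0) \<and> hcomul H g = tens g g"

text \<open>lam (a functional on H, only its restriction to A matters) restricts to a nonzero
  right integral of A*, i.e. lam(h_1) h_2 = lam(h) 1 for all h \<in> A\<close>
definition right_integral :: "('i::finite, 'k::field) hopf_data \<Rightarrow> ('i \<Rightarrow> 'k) set \<Rightarrow> ('i \<Rightarrow> 'k) \<Rightarrow> bool" where
  "right_integral H A lam \<longleftrightarrow> (\<exists>h\<in>A. fval lam h \<noteq> 0) \<and>
     (\<forall>h\<in>A. fun_id lam (hcomul H h) = vscale (fval lam h) (hone H))"

definition dist_grouplike :: "('i::finite, 'k::field) hopf_data \<Rightarrow> ('i \<Rightarrow> 'k) set \<Rightarrow> ('i \<Rightarrow> 'k) \<Rightarrow> bool" where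
  "dist_grouplike H A a \<longleftrightarrow> grouplike H A a \<and>
     (\<exists>lam. right_integral H A lam \<and>
        (\<forall>h\<in>A. id_fun lam (hcomul H h) = vscale (fval lam h) a))"

end

(*
  Extend a nonzero right integral mu of A* to a functional lam' on H = A + C that vanishes
  on C. Since C is a subcoalgebra, both lam'(h_1) h_2 and lam'(h_2) h_1 only see the
  A-component of h, so lam' is a right integral of H* whose distinguished element is the one
  of A. Right integrals of a finite-dimensional Hopf algebra are unique up to scalars
  (Larson-Sweedler): for a nonzero right integral lam the map h \<mapsto> lam(S(h) _) is injective,
  hence onto H*, and a right integral of the form lam(S(g) _) forces Delta g = 1 \<otimes> g, i.e. g
  is a scalar. So lam' is a nonzero multiple of the integral of H, and the two distinguished
  group-like elements coincide.
*)

theory Submission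
  imports Defs "HOL-Library.Function_Algebras"
begin

lemma sum_fun_apply: "(\<Sum>x\<in>A. f x) i = (\<Sum>x\<in>A. f x i)"
  by (induction A rule: infinite_finite_induct) auto

lemma if_one_mult [simp]: "(if P then (1::'k::field) else 0) * x = (if P then x else 0)"
  by simp

lemma mult_if_one [simp]: "x * (if P then (1::'k::field) else 0) = (if P then x else 0)"
  by simp

lemma if_zero_mult [simp]: "(if P then x else (0::'k::field)) * y = (if P then x * y else 0)"
  by simp

lemma mult_if_zero [simp]: "y * (if P then x else (0::'k::field)) = (if P then y * x else 0)"
  by simp

lemma sum_if_zero_const [simp]:
  "(\<Sum>j\<in>A. if P then f j else (0::'k::field))
    = (if P then (\<Sum>j\<in>A. f j) else 0)"
  by simp

lemma sum_UNIV_pair: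
  "(\<Sum>z\<in>(UNIV::('a::finite \<times> 'b::finite) set). f z) = (\<Sum>x\<in>UNIV. \<Sum>y\<in>UNIV. f (x, y))"
  by (simp add: sum.cartesian_product)

lemma sum_product_scaled:
  fixes f g :: "_ \<Rightarrow> 'a::comm_ring_1"
  shows "(\<Sum>j\<in>A. \<Sum>w\<in>B. f j * k * g w) = (\<Sum>j\<in>A. f j) * k * (\<Sum>w\<in>B. g w)"
proof -
  have "sum f A * k * sum g B = (\<Sum>j\<in>A. f j * k) * sum g B" by (simp only: sum_distrib_right)
  also have "\<dots> = (\<Sum>j\<in>A. \<Sum>w\<in>B. f j * k * g w)" by (rule sum_product)
  finally show ?thesis by simp
qed

lemma sum_move_in2:
  "(\<Sum>l\<in>A. \<Sum>i1\<in>B1. \<Sum>i2\<in>B2. f l i1 i2)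
    = (\<Sum>i1\<in>B1. \<Sum>i2\<in>B2. \<Sum>l\<in>A. f l i1 i2)"
  by (subst sum.swap) (rule sum.cong[OF refl], rule sum.swap)

lemma sum_move_in3:
  "(\<Sum>l\<in>A. \<Sum>i1\<in>B1. \<Sum>i2\<in>B2. \<Sum>i3\<in>B3. f l i1 i2 i3)
    = (\<Sum>i1\<in>B1. \<Sum>i2\<in>B2. \<Sum>i3\<in>B3. \<Sum>l\<in>A. f l i1 i2 i3)"
  by (subst sum.swap) (rule sum.cong[OF refl], rule sum_move_in2)

lemma sum_move_in4:
  "(\<Sum>l\<in>A. \<Sum>i1\<in>B1. \<Sum>i2\<in>B2. \<Sum>i3\<in>B3. \<Sum>i4\<in>B4. f l i1 i2 i3 i4)
    = (\<Sum>i1\<in>B1. \<Sum>i2\<in>B2. \<Sum>i3\<in>B3. \<Sum>i4\<in>B4. \<Sum>l\<in>A. f l i1 i2 i3 i4)"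
  by (subst sum.swap) (rule sum.cong[OF refl], rule sum_move_in3)

lemma sum_move_in5:
  "(\<Sum>l\<in>A. \<Sum>i1\<in>B1. \<Sum>i2\<in>B2. \<Sum>i3\<in>B3. \<Sum>i4\<in>B4. \<Sum>i5\<in>B5. f l i1 i2 i3 i4 i5)
    = (\<Sum>i1\<in>B1. \<Sum>i2\<in>B2. \<Sum>i3\<in>B3. \<Sum>i4\<in>B4. \<Sum>i5\<in>B5. \<Sum>l\<in>A. f l i1 i2 i3 i4 i5)"
  by (subst sum.swap) (rule sum.cong[OF refl], rule sum_move_in4)

lemma sum_move_in6:
  "(\<Sum>l\<in>A. \<Sum>i1\<in>B1. \<Sum>i2\<in>B2. \<Sum>i3\<in>B3. \<Sum>i4\<in>B4. \<Sum>i5\<in>B5. \<Sum>i6\<in>B6. f l i1 i2 i3 i4 i5 i6)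
    = (\<Sum>i1\<in>B1. \<Sum>i2\<in>B2. \<Sum>i3\<in>B3. \<Sum>i4\<in>B4. \<Sum>i5\<in>B5. \<Sum>i6\<in>B6. \<Sum>l\<in>A. f l i1 i2 i3 i4 i5 i6)"
  by (subst sum.swap) (rule sum.cong[OF refl], rule sum_move_in5)

lemma sum_move_in7:
  "(\<Sum>l\<in>A. \<Sum>i1\<in>B1. \<Sum>i2\<in>B2. \<Sum>i3\<in>B3. \<Sum>i4\<in>B4. \<Sum>i5\<in>B5. \<Sum>i6\<in>B6. \<Sum>i7\<in>B7. f l i1 i2 i3 i4 i5 i6 i7)
    = (\<Sum>i1\<in>B1. \<Sum>i2\<in>B2. \<Sum>i3\<in>B3. \<Sum>i4\<in>B4. \<Sum>i5\<in>B5. \<Sum>i6\<in>B6. \<Sum>i7\<in>B7. \<Sum>l\<in>A. f l i1 i2 i3 i4 i5 i6 i7)"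
  by (subst sum.swap) (rule sum.cong[OF refl], rule sum_move_in6)

lemma sum_move_in8:
  "(\<Sum>l\<in>A. \<Sum>i1\<in>B1. \<Sum>i2\<in>B2. \<Sum>i3\<in>B3. \<Sum>i4\<in>B4. \<Sum>i5\<in>B5. \<Sum>i6\<in>B6. \<Sum>i7\<in>B7. \<Sum>i8\<in>B8. f l i1 i2 i3 i4 i5 i6 i7 i8)
    = (\<Sum>i1\<in>B1. \<Sum>i2\<in>B2. \<Sum>i3\<in>B3. \<Sum>i4\<in>B4. \<Sum>i5\<in>B5. \<Sum>i6\<in>B6. \<Sum>i7\<in>B7. \<Sum>i8\<in>B8. \<Sum>l\<in>A. f l i1 i2 i3 i4 i5 i6 i7 i8)"
  by (subst sum.swap) (rule sum.cong[OF refl], rule sum_move_in7)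

lemma sum_move_in9:
  "(\<Sum>l\<in>A. \<Sum>i1\<in>B1. \<Sum>i2\<in>B2. \<Sum>i3\<in>B3. \<Sum>i4\<in>B4. \<Sum>i5\<in>B5. \<Sum>i6\<in>B6. \<Sum>i7\<in>B7. \<Sum>i8\<in>B8. \<Sum>i9\<in>B9. f l i1 i2 i3 i4 i5 i6 i7 i8 i9)
    = (\<Sum>i1\<in>B1. \<Sum>i2\<in>B2. \<Sum>i3\<in>B3. \<Sum>i4\<in>B4. \<Sum>i5\<in>B5. \<Sum>i6\<in>B6. \<Sum>i7\<in>B7. \<Sum>i8\<in>B8. \<Sum>i9\<in>B9. \<Sum>l\<in>A. f l i1 i2 i3 i4 i5 i6 i7 i8 i9)"
  by (subst sum.swap) (rule sum.cong[OF refl], rule sum_move_in8)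

lemma bvec_apply: "bvec a i = (if i = a then 1 else 0)"
  by (simp add: bvec_def)

lemma vector_space_vscale:
  "vector_space (vscale :: 'k::field \<Rightarrow> ('i \<Rightarrow> 'k) \<Rightarrow> _)"
  by unfold_locales (auto simp: vscale_def algebra_simps fun_eq_iff)

lemma sum_vscale_bvec:
  "(\<Sum>j\<in>UNIV. vscale (x j) (bvec j))
    = (x :: 'i::finite \<Rightarrow> 'k::field)"
  by (simp add: fun_eq_iff sum_fun_apply vscale_def bvec_apply)

lemma finite_dimensional_vscale:
  "finite_dimensional_vector_space (vscale :: 'k::field \<Rightarrow> ('i::finite \<Rightarrow> 'k) \<Rightarrow> _) (range bvec)"
proof -
  interpret vector_space "vscale :: 'k \<Rightarrow> ('i \<Rightarrow> 'k) \<Rightarrow> _"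
    by (rule vector_space_vscale)
  have inj: "inj (bvec :: 'i \<Rightarrow> 'i \<Rightarrow> 'k)"
    by (auto simp: inj_def bvec_def fun_eq_iff split: if_splits)
  have reindex: "(\<Sum>v\<in>range bvec. vscale (f v) v) = (\<Sum>j\<in>UNIV. vscale (f (bvec j)) (bvec j))"
    for f :: "('i \<Rightarrow> 'k) \<Rightarrow> 'k"
    by (simp add: sum.reindex[OF inj])
  show ?thesis
  proof
    show "independent (range (bvec :: 'i \<Rightarrow> 'i \<Rightarrow> 'k))"
    proof (rule independent_if_scalars_zero)
      fix f :: "('i \<Rightarrow> 'k) \<Rightarrow> 'k" and x :: "'i \<Rightarrow> 'k"
      assume "(\<Sum>x\<in>range bvec. vscale (f x) x) = 0" and "x \<in> range bvec"
      then show "f x = 0"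
        using sum_vscale_bvec[of "\<lambda>j. f (bvec j)"] by (auto simp: reindex fun_eq_iff)
    qed simp
    have "\<exists>u. x = (\<Sum>v\<in>range bvec. vscale (u v) v)" for x :: "'i \<Rightarrow> 'k"
      by (rule exI[of _ "\<lambda>v. x (inv bvec v)"]) (simp add: reindex inv_f_f[OF inj] sum_vscale_bvec)
    then show "span (range (bvec :: 'i \<Rightarrow> 'i \<Rightarrow> 'k)) = UNIV"
      by (auto simp: span_finite image_iff)
  qed simp
qed

lemma linear_inj_imp_surj_vec:
  fixes f :: "('i::finite \<Rightarrow> 'k::field) \<Rightarrow> ('i \<Rightarrow> 'k)"
  assumes "\<And>x y. f (x + y) = f x + f y" and "\<And>c x. f (vscale c x) = vscale c (f x)"
    and "inj f"
  shows "surj f"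
proof -
  interpret finite_dimensional_vector_space "vscale :: 'k \<Rightarrow> ('i \<Rightarrow> 'k) \<Rightarrow> _" "range bvec"
    by (rule finite_dimensional_vscale)
  have "Vector_Spaces.linear vscale vscale f"
    by unfold_locales (auto simp: assms)
  then show ?thesis
    using linear_inj_imp_surj \<open>inj f\<close> by blast
qed

lemma fval_bvec [simp]: "fval f (bvec q) = f q"
  by (simp add: fval_def bvec_apply)

lemma fval_add: "fval f (vadd x y) = fval f x + fval f y"
  by (simp add: fval_def vadd_def algebra_simps sum.distrib)

lemma fval_scale: "fval f (vscale c x) = c * fval f x"
  by (simp add: fval_def vscale_def sum_distrib_left mult_ac)

lemma fval_scale_fun: "fval (\<lambda>q. \<kappa> * f q) x = \<kappa> * fval f x"
  by (simp add: fval_def sum_distrib_left mult_ac)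

lemma fval_nonzero_imp_nonzero: "fval f x \<noteq> 0 \<Longrightarrow> \<exists>z. f z \<noteq> 0"
proof (rule ccontr)
  assume "fval f x \<noteq> 0" and "\<not> (\<exists>z. f z \<noteq> 0)"
  then show False
    by (simp add: fval_def)
qed

lemma linear_functional_eq_fval:
  fixes \<phi> :: "('i::finite \<Rightarrow> 'k::field) \<Rightarrow> 'k"
  assumes add: "\<And>x y. \<phi> (vadd x y) = \<phi> x + \<phi> y" and scale: "\<And>c x. \<phi> (vscale c x) = c * \<phi> x"
  shows "\<phi> x = fval (\<lambda>q. \<phi> (bvec q)) x"
proof -
  have "\<phi> (\<lambda>i. if i \<in> S then x i else 0) = (\<Sum>q\<in>S. x q * \<phi> (bvec q))" if "finite S" for S
    using that
  proof (induction S rule: finite_induct)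
    case empty
    have "\<phi> (\<lambda>i. 0) = \<phi> (vscale 0 (\<lambda>i. 0))"
      by (simp add: vscale_def)
    then show ?case
      by (simp add: scale)
  next
    case (insert q S)
    have "(\<lambda>i. if i \<in> insert q S then x i else 0)
        = vadd (\<lambda>i. if i \<in> S then x i else 0) (vscale (x q) (bvec q))"
      using insert.hyps by (auto simp: vadd_def vscale_def bvec_apply fun_eq_iff)
    then show ?case
      using insert by (simp add: add scale)
  qed
  from this[of UNIV] show ?thesis
    by (simp add: fval_def mult.commute)
qed

lemma subspace_zero: "is_subspace A \<Longrightarrow> (\<lambda>i. 0) \<in> A"
  by (simp add: is_subspace_def)

lemma subspace_add: "is_subspace A \<Longrightarrow> x \<in> A \<Longrightarrow> y \<in> A \<Longrightarrow> vadd x y \<in> A"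
  by (simp add: is_subspace_def)

lemma subspace_scale: "is_subspace A \<Longrightarrow> x \<in> A \<Longrightarrow> vscale c x \<in> A"
  by (simp add: is_subspace_def)

lemma subspace_diff:
  "is_subspace A \<Longrightarrow> x \<in> A \<Longrightarrow> y \<in> A \<Longrightarrow> (\<lambda>i. x i - y i) \<in> A"
proof -
  assume a: "is_subspace A" "x \<in> A" "y \<in> A"
  have "vadd x (vscale (-1) y) \<in> A" using a by (simp add: subspace_add subspace_scale)
  moreover have "vadd x (vscale (-1) y) = (\<lambda>i. x i - y i)" by (simp add: vadd_def vscale_def)
  ultimately show ?thesis by simp
qed

lemma direct_sum_unique:
  assumes sA: "is_subspace A" and sC: "is_subspace C" and inter: "A \<inter> C = {(\<lambda>i. 0)}"
    and y: "y \<in> A" "y' \<in> A" and z: "z \<in> C" "z' \<in> C" and eq: "vadd y z = vadd y' z'"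
  shows "y = y'"
proof -
  have e: "(\<lambda>i. y i - y' i) = (\<lambda>i. z' i - z i)"
    using eq by (auto simp: vadd_def fun_eq_iff algebra_simps dest: fun_cong)
  have "(\<lambda>i. y i - y' i) \<in> A" using sA y by (rule subspace_diff)
  moreover have "(\<lambda>i. y i - y' i) \<in> C" unfolding e using sC z by (intro subspace_diff)
  ultimately have "(\<lambda>i. y i - y' i) = (\<lambda>i. 0)" using inter by blast
  then show ?thesis by (auto simp: fun_eq_iff dest: fun_cong)
qed

lemma direct_sum_projection:
  assumes "is_subspace A" and "is_subspace C" and "A \<inter> C = {(\<lambda>i. 0)}"
    and "\<forall>x. \<exists>y\<in>A. \<exists>z\<in>C. x = vadd y z"
  obtains P where "\<And>y z. y \<in> A \<Longrightarrow> z \<in> C \<Longrightarrow> P (vadd y z) = y"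
proof
  define P where "P x = (SOME y. y \<in> A \<and> (\<exists>z\<in>C. x = vadd y z))" for x
  fix y z
  assume "y \<in> A" "z \<in> C"
  then have "\<exists>y'. y' \<in> A \<and> (\<exists>z'\<in>C. vadd y z = vadd y' z')"
    by blast
  then have "P (vadd y z) \<in> A \<and> (\<exists>z'\<in>C. vadd y z = vadd (P (vadd y z)) z')"
    unfolding P_def by (rule someI_ex)
  then show "P (vadd y z) = y"
    using direct_sum_unique[OF assms(1-3)] \<open>y \<in> A\<close> \<open>z \<in> C\<close> by metis
qed

lemma direct_sum_functional:
  fixes mu :: "'i::finite \<Rightarrow> 'k::field"
  assumes sA: "is_subspace A" and sC: "is_subspace C" and "A \<inter> C = {(\<lambda>i. 0)}"
    and sum: "\<forall>x. \<exists>y\<in>A. \<exists>z\<in>C. x = vadd y z"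
  obtains lam where "\<And>y. y \<in> A \<Longrightarrow> fval lam y = fval mu y" and "\<And>z. z \<in> C \<Longrightarrow> fval lam z = 0"
proof -
  obtain P where P: "\<And>y z. y \<in> A \<Longrightarrow> z \<in> C \<Longrightarrow> P (vadd y z) = y"
    using direct_sum_projection[OF assms] by blast
  define \<phi> where "\<phi> x = fval mu (P x)" for x
  have add: "\<phi> (vadd x x') = \<phi> x + \<phi> x'" for x x'
  proof -
    obtain y z y' z' where "y \<in> A" "z \<in> C" "x = vadd y z" "y' \<in> A" "z' \<in> C" "x' = vadd y' z'"
      using sum by meson
    moreover have "vadd x x' = vadd (vadd y y') (vadd z z')"
      using calculation by (simp add: vadd_def fun_eq_iff algebra_simps)
    ultimately show ?thesis
      using sA sC by (simp add: \<phi>_def P subspace_add fval_add)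
  qed
  have scale: "\<phi> (vscale a x) = a * \<phi> x" for a x
  proof -
    obtain y z where "y \<in> A" "z \<in> C" "x = vadd y z"
      using sum by meson
    moreover have "vscale a x = vadd (vscale a y) (vscale a z)"
      using calculation by (simp add: vadd_def vscale_def fun_eq_iff algebra_simps)
    ultimately show ?thesis
      using sA sC by (simp add: \<phi>_def P subspace_scale fval_scale)
  qed
  have "\<phi> y = fval mu y" if "y \<in> A" for y
    using P[OF that subspace_zero[OF sC]] by (simp add: \<phi>_def vadd_def)
  moreover have "\<phi> z = 0" if "z \<in> C" for z
    using P[OF subspace_zero[OF sA] that] by (simp add: \<phi>_def vadd_def fval_def)
  ultimately show ?thesis
    using that linear_functional_eq_fval[of \<phi>, OF add scale] by metis
qed

lemma fun_id_tsub:
  "fun_id f (\<lambda>(i, j). \<Sum>k<n. A k i * B k j)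
    = (\<lambda>j. \<Sum>k<n. fval f (A k) * B k j)"
  by (auto simp: fun_id_def fval_def fun_eq_iff sum_distrib_left sum_distrib_right mult_ac intro: sum.swap)

lemma id_fun_tsub:
  "id_fun f (\<lambda>(i, j). \<Sum>k<n. A k i * B k j)
    = (\<lambda>i. \<Sum>k<n. A k i * fval f (B k))"
  by (auto simp: id_fun_def fval_def fun_eq_iff sum_distrib_left sum_distrib_right mult_ac intro: sum.swap)

lemma fun_id_add: "fun_id f (\<lambda>p. t1 p + t2 p) = (\<lambda>j. fun_id f t1 j + fun_id f t2 j)"
  by (simp add: fun_id_def algebra_simps sum.distrib)

lemma id_fun_add: "id_fun f (\<lambda>p. t1 p + t2 p) = (\<lambda>j. id_fun f t1 j + id_fun f t2 j)"
  by (simp add: id_fun_def algebra_simps sum.distrib)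

lemma id_fun_scale_fun: "id_fun (\<lambda>q. \<kappa> * f q) t = vscale \<kappa> (id_fun f t)"
  by (simp add: id_fun_def vscale_def sum_distrib_left mult_ac)

lemma hcomul_add: "hcomul H (vadd y z) = (\<lambda>p. hcomul H y p + hcomul H z p)"
  by (auto simp: hcomul_def vadd_def algebra_simps sum.distrib fun_eq_iff)

lemma fun_id_tensor_sub_cong:
  assumes "t \<in> tensor_sub D" and "\<And>x. x \<in> D \<Longrightarrow> fval f x = fval g x"
  shows "fun_id f t = fun_id g t"
  using assms by (auto simp: tensor_sub_def fun_id_tsub)

lemma id_fun_tensor_sub_cong:
  assumes "t \<in> tensor_sub D" and "\<And>x. x \<in> D \<Longrightarrow> fval f x = fval g x"
  shows "id_fun f t = id_fun g t"
  using assms by (auto simp: tensor_sub_def id_fun_tsub)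

lemma right_integral_extension:
  assumes A: "\<forall>x\<in>A. hcomul H x \<in> tensor_sub A" and C: "\<forall>z\<in>C. hcomul H z \<in> tensor_sub C"
    and sum: "\<forall>x. \<exists>y\<in>A. \<exists>z\<in>C. x = vadd y z"
    and agree: "\<And>y. y \<in> A \<Longrightarrow> fval lam y = fval mu y"
    and vanish: "\<And>z. z \<in> C \<Longrightarrow> fval lam z = 0"
    and integral: "\<And>y. y \<in> A \<Longrightarrow> fun_id mu (hcomul H y) = vscale (fval mu y) (hone H)"
    and distinguished: "\<And>y. y \<in> A \<Longrightarrow> id_fun mu (hcomul H y) = vscale (fval mu y) b"
  shows "fun_id lam (hcomul H h) = vscale (fval lam h) (hone H)"
    and "id_fun lam (hcomul H h) = vscale (fval lam h) b"
proof -
  obtain y z where y: "y \<in> A" and z: "z \<in> C" and h: "h = vadd y z"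
    using sum by blast
  have "fval lam h = fval mu y"
    using y z by (simp add: h fval_add agree vanish)
  moreover have "fun_id lam (hcomul H z) = (\<lambda>j. 0)" "id_fun lam (hcomul H z) = (\<lambda>i. 0)"
  proof -
    have zero: "fval lam x = fval (\<lambda>i. 0) x" if "x \<in> C" for x
      by (simp add: vanish[OF that]) (simp add: fval_def)
    have "hcomul H z \<in> tensor_sub C"
      using C z by blast
    from fun_id_tensor_sub_cong[OF this zero] id_fun_tensor_sub_cong[OF this zero]
    show "fun_id lam (hcomul H z) = (\<lambda>j. 0)" "id_fun lam (hcomul H z) = (\<lambda>i. 0)"
      by (simp_all add: fun_id_def id_fun_def)
  qed
  moreover have "fun_id lam (hcomul H y) = fun_id mu (hcomul H y)"
    "id_fun lam (hcomul H y) = id_fun mu (hcomul H y)"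
    using fun_id_tensor_sub_cong id_fun_tensor_sub_cong A y agree by blast+
  ultimately show "fun_id lam (hcomul H h) = vscale (fval lam h) (hone H)"
    and "id_fun lam (hcomul H h) = vscale (fval lam h) b"
    using y by (simp_all add: h hcomul_add fun_id_add id_fun_add integral distinguished)
qed

lemma distinguished_element_scale_invariant:
  assumes "fval lam h \<noteq> 0" and "\<kappa> \<noteq> 0"
    and "id_fun lam t = vscale (fval lam h) a"
    and "id_fun (\<lambda>q. \<kappa> * lam q) t = vscale (fval (\<lambda>q. \<kappa> * lam q) h) b"
  shows "a = b"
proof -
  have "vscale (\<kappa> * fval lam h) b = id_fun (\<lambda>q. \<kappa> * lam q) t"
    using assms(4) by (simp add: fval_scale_fun)
  also have "\<dots> = vscale \<kappa> (vscale (fval lam h) a)"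
    using assms(3) by (simp add: id_fun_scale_fun)
  finally show ?thesis
    using assms(1,2) by (simp add: vscale_def fun_eq_iff)
qed

locale hopf =
  fixes H :: "('i::finite, 'k::field) hopf_data"
  assumes hopf: "is_hopf H"
begin

abbreviation "m \<equiv> mc H"
abbreviation "c \<equiv> cc H"
abbreviation "s \<equiv> sc H"
abbreviation "u \<equiv> uc H"
abbreviation "e \<equiv> ec H"

lemma hmul_bvec: "hmul H (bvec a) (bvec b) = m a b"
  by (simp add: hmul_def bvec_apply fun_eq_iff)

lemma hcomul_bvec: "hcomul H (bvec a) = (\<lambda>(i,j). c a i j)"
  by (simp add: hcomul_def bvec_apply fun_eq_iff)

lemma hanti_bvec: "hanti H (bvec a) = s a"
  by (simp add: hanti_def bvec_apply fun_eq_iff)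

lemma hcounit_bvec: "hcounit H (bvec a) = e a"
  by (simp add: hcounit_def bvec_apply)

lemma mc_assoc: "(\<Sum>l\<in>UNIV. m a b l * m l d n) = (\<Sum>l\<in>UNIV. m b d l * m a l n)"
proof -
  have "hmul H (hmul H (bvec a) (bvec b)) (bvec d) n = hmul H (bvec a) (hmul H (bvec b) (bvec d)) n"
    using hopf by (simp add: is_hopf_def)
  then show ?thesis by (simp add: hmul_bvec) (simp add: hmul_def bvec_apply)
qed

lemma uc_mc_left: "(\<Sum>i\<in>UNIV. u i * m i j l) = (if j = l then 1 else 0)"
proof -
  have "hmul H (hone H) (bvec j) l = bvec j l"
    using hopf by (simp add: is_hopf_def)
  then show ?thesis by (simp add: hmul_def bvec_apply hone_def)
qed

lemma uc_mc_right: "(\<Sum>i\<in>UNIV. u i * m j i l) = (if j = l then 1 else 0)"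
proof -
  have "hmul H (bvec j) (hone H) l = bvec j l"
    using hopf by (simp add: is_hopf_def)
  then show ?thesis by (simp add: hmul_def bvec_apply hone_def mult.commute)
qed

lemma cc_coassoc: "(\<Sum>p\<in>UNIV. c q p l * c p i j) = (\<Sum>p\<in>UNIV. c q i p * c p j l)"
proof -
  have "comul_id H (hcomul H (bvec q)) (i,j,l) = id_comul H (hcomul H (bvec q)) (i,j,l)"
    using hopf by (simp add: is_hopf_def)
  then show ?thesis by (simp add: hcomul_bvec comul_id_def id_comul_def)
qed

lemma ec_cc_left: "(\<Sum>i\<in>UNIV. e i * c q i j) = (if q = j then 1 else 0)"
proof -
  have "fun_id (ec H) (hcomul H (bvec q)) j = bvec q j"
    using hopf by (simp add: is_hopf_def)
  then show ?thesis by (simp add: hcomul_bvec fun_id_def bvec_apply)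
qed

lemma ec_cc_right: "(\<Sum>j\<in>UNIV. c q i j * e j) = (if q = i then 1 else 0)"
proof -
  have "id_fun (ec H) (hcomul H (bvec q)) i = bvec q i"
    using hopf by (simp add: is_hopf_def)
  then show ?thesis by (simp add: hcomul_bvec id_fun_def bvec_apply)
qed

lemma cc_mc: "(\<Sum>l\<in>UNIV. m a b l * c l i j) =
   (\<Sum>p\<in>UNIV. \<Sum>q\<in>UNIV. \<Sum>r\<in>UNIV. \<Sum>t\<in>UNIV. c a p q * c b r t * m p r i * m q t j)"
proof -
  have "hcomul H (hmul H (bvec a) (bvec b)) (i,j) = tmul H (hcomul H (bvec a)) (hcomul H (bvec b)) (i,j)"
    using hopf by (simp add: is_hopf_def)
  then show ?thesis
    by (simp add: hmul_bvec hcomul_bvec tmul_def sum_UNIV_pair) (simp add: hcomul_def)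
qed

lemma uc_cc: "(\<Sum>l\<in>UNIV. u l * c l i j) = u i * u j"
proof -
  have "hcomul H (hone H) (i,j) = tens (hone H) (hone H) (i,j)"
    using hopf by (simp add: is_hopf_def)
  then show ?thesis by (simp add: hcomul_def hone_def tens_def)
qed

lemma mc_ec: "(\<Sum>l\<in>UNIV. m a b l * e l) = e a * e b"
proof -
  have "hcounit H (hmul H (bvec a) (bvec b)) = hcounit H (bvec a) * hcounit H (bvec b)"
    using hopf by (simp add: is_hopf_def)
  then show ?thesis by (simp add: hmul_bvec hcounit_bvec) (simp add: hcounit_def)
qed

lemma uc_ec: "(\<Sum>l\<in>UNIV. u l * e l) = 1"
  using hopf by (simp add: is_hopf_def hcounit_def hone_def)

lemma antipode_left:
  "(\<Sum>i\<in>UNIV. \<Sum>j\<in>UNIV. c q i j * (\<Sum>p\<in>UNIV. s i p * m p j l))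
    = e q * u l"
proof -
  have "mul_S_id H (hcomul H (bvec q)) l = vscale (hcounit H (bvec q)) (hone H) l"
    using hopf by (simp add: is_hopf_def)
  then show ?thesis
    by (simp add: hcomul_bvec hcounit_bvec mul_S_id_def hanti_bvec hone_def vscale_def
        sum_UNIV_pair) (simp add: hmul_def bvec_apply)
qed

lemma antipode_right:
  "(\<Sum>i\<in>UNIV. \<Sum>j\<in>UNIV. c q i j * (\<Sum>p\<in>UNIV. s j p * m i p l))
    = e q * u l"
proof -
  have "mul_id_S H (hcomul H (bvec q)) l = vscale (hcounit H (bvec q)) (hone H) l"
    using hopf by (simp add: is_hopf_def)
  then show ?thesis
    by (simp add: hcomul_bvec hcounit_bvec mul_id_S_def hanti_bvec hone_def vscale_def
        sum_UNIV_pair) (simp add: hmul_def bvec_apply)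
qed

lemma ec_antipode: "(\<Sum>p\<in>UNIV. s a p * e p) = e a"
proof -
  have "(\<Sum>l\<in>UNIV. (\<Sum>i\<in>UNIV. \<Sum>j\<in>UNIV. c a i j * (\<Sum>p\<in>UNIV. s j p * m i p l)) * e l) = (\<Sum>l\<in>UNIV. e a * u l * e l)"
    by (simp add: antipode_right)
  also have "\<dots> = e a" by (simp add: uc_ec mult.assoc flip: sum_distrib_left)
  finally have 1: "(\<Sum>l\<in>UNIV. (\<Sum>i\<in>UNIV. \<Sum>j\<in>UNIV. c a i j * (\<Sum>p\<in>UNIV. s j p * m i p l)) * e l) = e a" .
  have "(\<Sum>l\<in>UNIV. (\<Sum>i\<in>UNIV. \<Sum>j\<in>UNIV. c a i j * (\<Sum>p\<in>UNIV. s j p * m i p l)) * e l)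
    = (\<Sum>l\<in>UNIV. \<Sum>i\<in>UNIV. \<Sum>j\<in>UNIV. \<Sum>p\<in>UNIV. c a i j * s j p * (m i p l * e l))"
    by (simp add: sum_distrib_left sum_distrib_right mult_ac)
  also have "\<dots> = (\<Sum>i\<in>UNIV. \<Sum>j\<in>UNIV. \<Sum>p\<in>UNIV. \<Sum>l\<in>UNIV. c a i j * s j p * (m i p l * e l))"
    by (rule sum_move_in3)
  also have "\<dots> = (\<Sum>i\<in>UNIV. \<Sum>j\<in>UNIV. \<Sum>p\<in>UNIV. c a i j * s j p * (e i * e p))"
    by (simp add: mc_ec flip: sum_distrib_left)
  also have "\<dots> = (\<Sum>j\<in>UNIV. \<Sum>i\<in>UNIV. (e i * c a i j) * (\<Sum>p\<in>UNIV. s j p * e p))"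
    by (subst sum.swap) (simp add: sum_distrib_left sum_distrib_right mult_ac)
  also have "\<dots> = (\<Sum>p\<in>UNIV. s a p * e p)" by (simp add: ec_cc_left flip: sum_distrib_right)
  finally show ?thesis using 1 by simp
qed

lemma uc_antipode: "(\<Sum>i\<in>UNIV. u i * s i l) = u l"
proof -
  have "(\<Sum>q\<in>UNIV. u q * (\<Sum>i\<in>UNIV. \<Sum>j\<in>UNIV. c q i j * (\<Sum>p\<in>UNIV. s i p * m p j l))) = (\<Sum>q\<in>UNIV. u q * e q) * u l"
    by (simp only: antipode_left) (simp add: sum_distrib_left sum_distrib_right mult_ac)
  also have "\<dots> = u l" by (simp add: uc_ec)
  finally have 1: "(\<Sum>q\<in>UNIV. u q * (\<Sum>i\<in>UNIV. \<Sum>j\<in>UNIV. c q i j * (\<Sum>p\<in>UNIV. s i p * m p j l))) = u l" .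
  have "(\<Sum>q\<in>UNIV. u q * (\<Sum>i\<in>UNIV. \<Sum>j\<in>UNIV. c q i j * (\<Sum>p\<in>UNIV. s i p * m p j l)))
     = (\<Sum>q\<in>UNIV. \<Sum>i\<in>UNIV. \<Sum>j\<in>UNIV. u q * c q i j * (\<Sum>p\<in>UNIV. s i p * m p j l))"
    by (simp add: sum_distrib_left sum_distrib_right mult_ac)
  also have "\<dots> = (\<Sum>i\<in>UNIV. \<Sum>j\<in>UNIV. \<Sum>q\<in>UNIV. u q * c q i j * (\<Sum>p\<in>UNIV. s i p * m p j l))"
    by (rule sum_move_in2)
  also have "\<dots> = (\<Sum>i\<in>UNIV. \<Sum>j\<in>UNIV. (\<Sum>q\<in>UNIV. u q * c q i j) * (\<Sum>p\<in>UNIV. s i p * m p j l))"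
    by (simp add: sum_distrib_right)
  also have "\<dots> = (\<Sum>i\<in>UNIV. \<Sum>j\<in>UNIV. \<Sum>p\<in>UNIV. u i * s i p * (u j * m p j l))"
    by (simp add: uc_cc sum_distrib_left sum_distrib_right mult_ac)
  also have "\<dots> = (\<Sum>i\<in>UNIV. \<Sum>p\<in>UNIV. \<Sum>j\<in>UNIV. u i * s i p * (u j * m p j l))"
    by (rule sum.cong[OF refl], rule sum.swap)
  also have "\<dots> = (\<Sum>i\<in>UNIV. \<Sum>p\<in>UNIV. u i * s i p * (\<Sum>j\<in>UNIV. u j * m p j l))"
    by (simp add: sum_distrib_left)
  also have "\<dots> = (\<Sum>i\<in>UNIV. u i * s i l)"
    by (simp add: uc_mc_right)
  finally show ?thesis using 1 by simp
qed

(* multiplication of H \<otimes> H, tensors being curried coordinate functions *)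
definition tmult :: "('i \<Rightarrow> 'i \<Rightarrow> 'k) \<Rightarrow> ('i \<Rightarrow> 'i \<Rightarrow> 'k) \<Rightarrow> 'i \<Rightarrow> 'i \<Rightarrow> 'k" where
  "tmult t t' x y = (\<Sum>x1\<in>UNIV. \<Sum>y1\<in>UNIV. \<Sum>x2\<in>UNIV. \<Sum>y2\<in>UNIV. t x1 y1 * t' x2 y2 * m x1 x2 x * m y1 y2 y)"

lemma tmult_sum_left:
  "tmult (\<lambda>x y. \<Sum>k\<in>K. T k x y) t' x y
    = (\<Sum>k\<in>K. tmult (T k) t' x y)"
  by (induction K rule: infinite_finite_induct) (simp_all add: tmult_def algebra_simps sum.distrib)

lemma tmult_sum_right:
  "tmult t (\<lambda>x y. \<Sum>k\<in>K. T k x y) x y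
    = (\<Sum>k\<in>K. tmult t (T k) x y)"
  by (induction K rule: infinite_finite_induct) (simp_all add: tmult_def algebra_simps sum.distrib)

lemma tmult_scale_left: "tmult (\<lambda>x y. w * T x y) t x y = w * tmult T t x y"
  by (simp add: tmult_def sum_distrib_left mult_ac)

lemma tmult_scale_right: "tmult t (\<lambda>x y. w * T x y) x y = w * tmult t T x y"
  by (simp add: tmult_def sum_distrib_left mult_ac)

lemma tmult_unit_left: "tmult (\<lambda>x y. u x * u y) t x y = t x y"
proof -
  have "tmult (\<lambda>x y. u x * u y) t x y = (\<Sum>x1\<in>UNIV. \<Sum>y1\<in>UNIV. \<Sum>x2\<in>UNIV. \<Sum>y2\<in>UNIV. u x1 * u y1 * t x2 y2 * m x1 x2 x * m y1 y2 y)"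
    unfolding tmult_def by simp
  also have "\<dots> = (\<Sum>y1\<in>UNIV. \<Sum>x2\<in>UNIV. \<Sum>y2\<in>UNIV. \<Sum>x1\<in>UNIV. u x1 * u y1 * t x2 y2 * m x1 x2 x * m y1 y2 y)"
    by (rule sum_move_in3)
  also have "\<dots> = (\<Sum>x2\<in>UNIV. \<Sum>y2\<in>UNIV. \<Sum>x1\<in>UNIV. \<Sum>y1\<in>UNIV. u x1 * u y1 * t x2 y2 * m x1 x2 x * m y1 y2 y)"
    by (rule sum_move_in3)
  also have "\<dots> = (\<Sum>x2\<in>UNIV. \<Sum>y2\<in>UNIV. t x2 y2 * (\<Sum>x1\<in>UNIV. u x1 * m x1 x2 x) * (\<Sum>y1\<in>UNIV. u y1 * m y1 y2 y))"
    by (simp add: sum_distrib_left sum_distrib_right mult_ac)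
  also have "\<dots> = t x y" by (simp add: uc_mc_left)
  finally show ?thesis .
qed

lemma tmult_unit_right: "tmult t (\<lambda>x y. u x * u y) x y = t x y"
proof -
  have "tmult t (\<lambda>x y. u x * u y) x y = (\<Sum>x1\<in>UNIV. \<Sum>y1\<in>UNIV. \<Sum>x2\<in>UNIV. \<Sum>y2\<in>UNIV. t x1 y1 * u x2 * u y2 * m x1 x2 x * m y1 y2 y)"
    unfolding tmult_def by (simp add: mult_ac)
  also have "\<dots> = (\<Sum>x1\<in>UNIV. \<Sum>y1\<in>UNIV. t x1 y1 * (\<Sum>x2\<in>UNIV. u x2 * m x1 x2 x) * (\<Sum>y2\<in>UNIV. u y2 * m y1 y2 y))"
    by (simp add: sum_distrib_left sum_distrib_right mult_ac)
  also have "\<dots> = t x y" by (simp add: uc_mc_right)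
  finally show ?thesis .
qed

lemma tmult_assoc: "tmult (tmult t t') t'' x y = tmult t (tmult t' t'') x y"
proof -
  have "tmult (tmult t t') t'' x y = (\<Sum>p\<in>UNIV. \<Sum>q\<in>UNIV. \<Sum>r\<in>UNIV. \<Sum>w\<in>UNIV. \<Sum>x1\<in>UNIV. \<Sum>y1\<in>UNIV. \<Sum>x2\<in>UNIV. \<Sum>y2\<in>UNIV. t x1 y1 * t' x2 y2 * t'' r w * (m x1 x2 p * m p r x) * (m y1 y2 q * m q w y))"
    by (simp add: tmult_def sum_distrib_left sum_distrib_right mult_ac)
  also have "\<dots> = (\<Sum>q\<in>UNIV. \<Sum>r\<in>UNIV. \<Sum>w\<in>UNIV. \<Sum>x1\<in>UNIV. \<Sum>y1\<in>UNIV. \<Sum>x2\<in>UNIV. \<Sum>y2\<in>UNIV. \<Sum>p\<in>UNIV. t x1 y1 * t' x2 y2 * t'' r w * (m x1 x2 p * m p r x) * (m y1 y2 q * m q w y))"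
    by (rule sum_move_in7)
  also have "\<dots> = (\<Sum>r\<in>UNIV. \<Sum>w\<in>UNIV. \<Sum>x1\<in>UNIV. \<Sum>y1\<in>UNIV. \<Sum>x2\<in>UNIV. \<Sum>y2\<in>UNIV. \<Sum>p\<in>UNIV. \<Sum>q\<in>UNIV. t x1 y1 * t' x2 y2 * t'' r w * (m x1 x2 p * m p r x) * (m y1 y2 q * m q w y))"
    by (rule sum_move_in7)
  also have "\<dots> = (\<Sum>w\<in>UNIV. \<Sum>x1\<in>UNIV. \<Sum>y1\<in>UNIV. \<Sum>x2\<in>UNIV. \<Sum>y2\<in>UNIV. \<Sum>r\<in>UNIV. \<Sum>p\<in>UNIV. \<Sum>q\<in>UNIV. t x1 y1 * t' x2 y2 * t'' r w * (m x1 x2 p * m p r x) * (m y1 y2 q * m q w y))"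
    by (rule sum_move_in5)
  also have "\<dots> = (\<Sum>x1\<in>UNIV. \<Sum>y1\<in>UNIV. \<Sum>x2\<in>UNIV. \<Sum>y2\<in>UNIV. \<Sum>r\<in>UNIV. \<Sum>w\<in>UNIV. \<Sum>p\<in>UNIV. \<Sum>q\<in>UNIV. t x1 y1 * t' x2 y2 * t'' r w * (m x1 x2 p * m p r x) * (m y1 y2 q * m q w y))"
    by (rule sum_move_in5)
  also have "\<dots> = (\<Sum>x1\<in>UNIV. \<Sum>y1\<in>UNIV. \<Sum>x2\<in>UNIV. \<Sum>y2\<in>UNIV. \<Sum>r\<in>UNIV. \<Sum>w\<in>UNIV. t x1 y1 * t' x2 y2 * t'' r w * (\<Sum>p\<in>UNIV. m x1 x2 p * m p r x) * (\<Sum>q\<in>UNIV. m y1 y2 q * m q w y))"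
    by (simp add: sum_distrib_left sum_distrib_right mult_ac)
  also have "\<dots> = (\<Sum>x1\<in>UNIV. \<Sum>y1\<in>UNIV. \<Sum>x2\<in>UNIV. \<Sum>y2\<in>UNIV. \<Sum>r\<in>UNIV. \<Sum>w\<in>UNIV. t x1 y1 * t' x2 y2 * t'' r w * (\<Sum>v\<in>UNIV. m x2 r v * m x1 v x) * (\<Sum>z\<in>UNIV. m y2 w z * m y1 z y))"
    by (simp only: mc_assoc)
  finally have L: "tmult (tmult t t') t'' x y = (\<Sum>x1\<in>UNIV. \<Sum>y1\<in>UNIV. \<Sum>x2\<in>UNIV. \<Sum>y2\<in>UNIV. \<Sum>r\<in>UNIV. \<Sum>w\<in>UNIV. t x1 y1 * t' x2 y2 * t'' r w * (\<Sum>v\<in>UNIV. m x2 r v * m x1 v x) * (\<Sum>z\<in>UNIV. m y2 w z * m y1 z y))" .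
  have "tmult t (tmult t' t'') x y = (\<Sum>x1\<in>UNIV. \<Sum>y1\<in>UNIV. \<Sum>v\<in>UNIV. \<Sum>z\<in>UNIV. \<Sum>x2\<in>UNIV. \<Sum>y2\<in>UNIV. \<Sum>r\<in>UNIV. \<Sum>w\<in>UNIV. t x1 y1 * t' x2 y2 * t'' r w * (m x2 r v * m x1 v x) * (m y2 w z * m y1 z y))"
    by (simp add: tmult_def sum_distrib_left sum_distrib_right mult_ac)
  also have "\<dots> = (\<Sum>x1\<in>UNIV. \<Sum>y1\<in>UNIV. \<Sum>z\<in>UNIV. \<Sum>x2\<in>UNIV. \<Sum>y2\<in>UNIV. \<Sum>r\<in>UNIV. \<Sum>w\<in>UNIV. \<Sum>v\<in>UNIV. t x1 y1 * t' x2 y2 * t'' r w * (m x2 r v * m x1 v x) * (m y2 w z * m y1 z y))"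
    by (rule sum.cong[OF refl], rule sum.cong[OF refl], rule sum_move_in5)
  also have "\<dots> = (\<Sum>x1\<in>UNIV. \<Sum>y1\<in>UNIV. \<Sum>x2\<in>UNIV. \<Sum>y2\<in>UNIV. \<Sum>r\<in>UNIV. \<Sum>w\<in>UNIV. \<Sum>v\<in>UNIV. \<Sum>z\<in>UNIV. t x1 y1 * t' x2 y2 * t'' r w * (m x2 r v * m x1 v x) * (m y2 w z * m y1 z y))"
    by (rule sum.cong[OF refl], rule sum.cong[OF refl], rule sum_move_in5)
  also have "\<dots> = (\<Sum>x1\<in>UNIV. \<Sum>y1\<in>UNIV. \<Sum>x2\<in>UNIV. \<Sum>y2\<in>UNIV. \<Sum>r\<in>UNIV. \<Sum>w\<in>UNIV. t x1 y1 * t' x2 y2 * t'' r w * (\<Sum>v\<in>UNIV. m x2 r v * m x1 v x) * (\<Sum>z\<in>UNIV. m y2 w z * m y1 z y))"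
    by (simp add: sum_distrib_left sum_distrib_right mult_ac)
  finally show ?thesis using L by simp
qed

lemma tmult_cc: "tmult (c p) (c j) x y = (\<Sum>l\<in>UNIV. m p j l * c l x y)"
  by (simp add: tmult_def cc_mc)

(* convolution of linear maps H \<rightarrow> H \<otimes> H, a map F being given by the images F a of the
   basis vectors *)
definition conv :: "('i \<Rightarrow> 'i \<Rightarrow> 'i \<Rightarrow> 'k) \<Rightarrow> ('i \<Rightarrow> 'i \<Rightarrow> 'i \<Rightarrow> 'k) \<Rightarrow> 'i \<Rightarrow> 'i \<Rightarrow> 'i \<Rightarrow> 'k" where
  "conv F G a x y = (\<Sum>i\<in>UNIV. \<Sum>j\<in>UNIV. c a i j * tmult (F i) (G j) x y)"

definition conv_unit :: "'i \<Rightarrow> 'i \<Rightarrow> 'i \<Rightarrow> 'k" where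
  "conv_unit a x y = e a * (u x * u y)"

lemma conv_unit_right: "conv F conv_unit a x y = F a x y"
proof -
  have "conv F conv_unit a x y = (\<Sum>i\<in>UNIV. \<Sum>j\<in>UNIV. c a i j * (e j * F i x y))"
    unfolding conv_def conv_unit_def by (simp add: tmult_scale_right tmult_unit_right)
  also have "\<dots> = (\<Sum>i\<in>UNIV. (\<Sum>j\<in>UNIV. c a i j * e j) * F i x y)"
    by (simp add: sum_distrib_left sum_distrib_right mult_ac)
  also have "\<dots> = F a x y" by (simp add: ec_cc_right)
  finally show ?thesis .
qed

lemma conv_unit_left: "conv conv_unit G a x y = G a x y"
proof -
  have "conv conv_unit G a x y = (\<Sum>i\<in>UNIV. \<Sum>j\<in>UNIV. c a i j * (e i * G j x y))"
    unfolding conv_def conv_unit_def by (simp add: tmult_scale_left tmult_unit_left)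
  also have "\<dots> = (\<Sum>j\<in>UNIV. \<Sum>i\<in>UNIV. c a i j * (e i * G j x y))"
    by (rule sum.swap)
  also have "\<dots> = (\<Sum>j\<in>UNIV. (\<Sum>i\<in>UNIV. e i * c a i j) * G j x y)"
    by (simp add: sum_distrib_left sum_distrib_right mult_ac)
  also have "\<dots> = G a x y" by (simp add: ec_cc_left)
  finally show ?thesis .
qed

lemma conv_assoc: "conv (conv F G) K a x y = conv F (conv G K) a x y"
proof -
  have "conv (conv F G) K a x y = (\<Sum>i\<in>UNIV. \<Sum>j\<in>UNIV. c a i j * (\<Sum>k\<in>UNIV. \<Sum>l\<in>UNIV. c i k l * tmult (tmult (F k) (G l)) (K j) x y))"
    unfolding conv_def by (simp add: tmult_sum_left tmult_scale_left)
  also have "\<dots> = (\<Sum>i\<in>UNIV. \<Sum>j\<in>UNIV. \<Sum>k\<in>UNIV. \<Sum>l\<in>UNIV. c a i j * c i k l * tmult (F k) (tmult (G l) (K j)) x y)"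
    by (simp add: tmult_assoc sum_distrib_left mult_ac)
  also have "\<dots> = (\<Sum>j\<in>UNIV. \<Sum>k\<in>UNIV. \<Sum>l\<in>UNIV. \<Sum>i\<in>UNIV. c a i j * c i k l * tmult (F k) (tmult (G l) (K j)) x y)"
    by (rule sum_move_in3)
  also have "\<dots> = (\<Sum>k\<in>UNIV. \<Sum>l\<in>UNIV. \<Sum>j\<in>UNIV. \<Sum>i\<in>UNIV. c a i j * c i k l * tmult (F k) (tmult (G l) (K j)) x y)"
    by (rule sum_move_in2)
  also have "\<dots> = (\<Sum>k\<in>UNIV. \<Sum>l\<in>UNIV. \<Sum>j\<in>UNIV. (\<Sum>i\<in>UNIV. c a i j * c i k l) * tmult (F k) (tmult (G l) (K j)) x y)"
    by (simp add: sum_distrib_right)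
  also have "\<dots> = (\<Sum>k\<in>UNIV. \<Sum>l\<in>UNIV. \<Sum>j\<in>UNIV. (\<Sum>i\<in>UNIV. c a k i * c i l j) * tmult (F k) (tmult (G l) (K j)) x y)"
    by (simp only: cc_coassoc)
  finally have L: "conv (conv F G) K a x y = (\<Sum>k\<in>UNIV. \<Sum>l\<in>UNIV. \<Sum>j\<in>UNIV. (\<Sum>i\<in>UNIV. c a k i * c i l j) * tmult (F k) (tmult (G l) (K j)) x y)" .
  have "conv F (conv G K) a x y = (\<Sum>k\<in>UNIV. \<Sum>i\<in>UNIV. c a k i * (\<Sum>l\<in>UNIV. \<Sum>j\<in>UNIV. c i l j * tmult (F k) (tmult (G l) (K j)) x y))"
    unfolding conv_def by (simp add: tmult_sum_right tmult_scale_right)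
  also have "\<dots> = (\<Sum>k\<in>UNIV. \<Sum>i\<in>UNIV. \<Sum>l\<in>UNIV. \<Sum>j\<in>UNIV. c a k i * c i l j * tmult (F k) (tmult (G l) (K j)) x y)"
    by (simp add: sum_distrib_left mult_ac)
  also have "\<dots> = (\<Sum>k\<in>UNIV. \<Sum>l\<in>UNIV. \<Sum>j\<in>UNIV. \<Sum>i\<in>UNIV. c a k i * c i l j * tmult (F k) (tmult (G l) (K j)) x y)"
    by (rule sum.cong[OF refl], rule sum_move_in2)
  also have "\<dots> = (\<Sum>k\<in>UNIV. \<Sum>l\<in>UNIV. \<Sum>j\<in>UNIV. (\<Sum>i\<in>UNIV. c a k i * c i l j) * tmult (F k) (tmult (G l) (K j)) x y)"
    by (simp add: sum_distrib_right)
  finally show ?thesis using L by simp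
qed

lemma cc_coassoc3:
  "(\<Sum>i\<in>UNIV. \<Sum>j\<in>UNIV. c a i j * c i p q * c j r t)
    = (\<Sum>i\<in>UNIV. \<Sum>j\<in>UNIV. c a p i * c i j t * c j q r)"
proof -
  have "(\<Sum>i\<in>UNIV. \<Sum>j\<in>UNIV. c a i j * c i p q * c j r t) = (\<Sum>j\<in>UNIV. \<Sum>i\<in>UNIV. c a i j * c i p q * c j r t)"
    by (rule sum.swap)
  also have "\<dots> = (\<Sum>j\<in>UNIV. (\<Sum>i\<in>UNIV. c a i j * c i p q) * c j r t)"
    by (simp add: sum_distrib_right)
  also have "\<dots> = (\<Sum>j\<in>UNIV. (\<Sum>i\<in>UNIV. c a p i * c i q j) * c j r t)"
    by (simp only: cc_coassoc)
  also have "\<dots> = (\<Sum>j\<in>UNIV. \<Sum>i\<in>UNIV. c a p i * c i q j * c j r t)"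
    by (simp add: sum_distrib_right)
  also have "\<dots> = (\<Sum>i\<in>UNIV. \<Sum>j\<in>UNIV. c a p i * c i q j * c j r t)"
    by (rule sum.swap)
  also have "\<dots> = (\<Sum>i\<in>UNIV. c a p i * (\<Sum>j\<in>UNIV. c i q j * c j r t))"
    by (simp add: sum_distrib_left mult_ac)
  also have "\<dots> = (\<Sum>i\<in>UNIV. c a p i * (\<Sum>j\<in>UNIV. c i j t * c j q r))"
    by (simp only: cc_coassoc)
  also have "\<dots> = (\<Sum>i\<in>UNIV. \<Sum>j\<in>UNIV. c a p i * c i j t * c j q r)"
    by (simp add: sum_distrib_left mult_ac)
  finally show ?thesis .
qed

definition comul_antipode :: "'i \<Rightarrow> 'i \<Rightarrow> 'i \<Rightarrow> 'k" where
  "comul_antipode a x y = (\<Sum>p\<in>UNIV. s a p * c p x y)"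

definition antipode_flip_comul :: "'i \<Rightarrow> 'i \<Rightarrow> 'i \<Rightarrow> 'k" where
  "antipode_flip_comul a x y = (\<Sum>i\<in>UNIV. \<Sum>j\<in>UNIV. c a i j * s j x * s i y)"

lemma comul_conv_antipode_flip: "conv c antipode_flip_comul a x y = conv_unit a x y"
proof -
  define P where "P = (\<lambda>x1 l. \<Sum>x2\<in>UNIV. s l x2 * m x1 x2 x)"
  define Q where "Q = (\<lambda>y1 k. \<Sum>y2\<in>UNIV. s k y2 * m y1 y2 y)"
  have "conv c antipode_flip_comul a x y = (\<Sum>i\<in>UNIV. \<Sum>j\<in>UNIV. \<Sum>x1\<in>UNIV. \<Sum>y1\<in>UNIV. \<Sum>x2\<in>UNIV. \<Sum>y2\<in>UNIV. \<Sum>k\<in>UNIV. \<Sum>l\<in>UNIV. c a i j * c i x1 y1 * c j k l * s l x2 * s k y2 * m x1 x2 x * m y1 y2 y)"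
    by (simp add: conv_def tmult_def antipode_flip_comul_def sum_distrib_left sum_distrib_right mult_ac)
  also have "\<dots> = (\<Sum>i\<in>UNIV. \<Sum>j\<in>UNIV. \<Sum>x1\<in>UNIV. \<Sum>y1\<in>UNIV. \<Sum>y2\<in>UNIV. \<Sum>k\<in>UNIV. \<Sum>l\<in>UNIV. \<Sum>x2\<in>UNIV. c a i j * c i x1 y1 * c j k l * s l x2 * s k y2 * m x1 x2 x * m y1 y2 y)"
    by (intro sum.cong refl sum_move_in3)
  also have "\<dots> = (\<Sum>i\<in>UNIV. \<Sum>j\<in>UNIV. \<Sum>x1\<in>UNIV. \<Sum>y1\<in>UNIV. \<Sum>k\<in>UNIV. \<Sum>l\<in>UNIV. \<Sum>x2\<in>UNIV. \<Sum>y2\<in>UNIV. c a i j * c i x1 y1 * c j k l * s l x2 * s k y2 * m x1 x2 x * m y1 y2 y)"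
    by (intro sum.cong refl sum_move_in3)
  also have "\<dots> = (\<Sum>i\<in>UNIV. \<Sum>j\<in>UNIV. \<Sum>x1\<in>UNIV. \<Sum>y1\<in>UNIV. \<Sum>k\<in>UNIV. \<Sum>l\<in>UNIV. c a i j * c i x1 y1 * c j k l * (P x1 l * Q y1 k))"
    by (simp add: P_def Q_def sum_distrib_left sum_distrib_right mult_ac)
  also have "\<dots> = (\<Sum>j\<in>UNIV. \<Sum>x1\<in>UNIV. \<Sum>y1\<in>UNIV. \<Sum>k\<in>UNIV. \<Sum>l\<in>UNIV. \<Sum>i\<in>UNIV. c a i j * c i x1 y1 * c j k l * (P x1 l * Q y1 k))"
    by (rule sum_move_in5)
  also have "\<dots> = (\<Sum>x1\<in>UNIV. \<Sum>y1\<in>UNIV. \<Sum>k\<in>UNIV. \<Sum>l\<in>UNIV. \<Sum>i\<in>UNIV. \<Sum>j\<in>UNIV. c a i j * c i x1 y1 * c j k l * (P x1 l * Q y1 k))"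
    by (rule sum_move_in5)
  also have "\<dots> = (\<Sum>x1\<in>UNIV. \<Sum>y1\<in>UNIV. \<Sum>k\<in>UNIV. \<Sum>l\<in>UNIV. (\<Sum>i\<in>UNIV. \<Sum>j\<in>UNIV. c a i j * c i x1 y1 * c j k l) * (P x1 l * Q y1 k))"
    by (simp only: sum_distrib_right)
  also have "\<dots> = (\<Sum>x1\<in>UNIV. \<Sum>y1\<in>UNIV. \<Sum>k\<in>UNIV. \<Sum>l\<in>UNIV. (\<Sum>i\<in>UNIV. \<Sum>j\<in>UNIV. c a x1 i * c i j l * c j y1 k) * (P x1 l * Q y1 k))"
    by (simp only: cc_coassoc3)
  also have "\<dots> = (\<Sum>x1\<in>UNIV. \<Sum>y1\<in>UNIV. \<Sum>k\<in>UNIV. \<Sum>l\<in>UNIV. \<Sum>i\<in>UNIV. \<Sum>j\<in>UNIV. c a x1 i * c i j l * (c j y1 k * Q y1 k) * P x1 l)"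
    by (simp add: sum_distrib_left sum_distrib_right mult_ac)
  also have "\<dots> = (\<Sum>x1\<in>UNIV. \<Sum>k\<in>UNIV. \<Sum>l\<in>UNIV. \<Sum>i\<in>UNIV. \<Sum>j\<in>UNIV. \<Sum>y1\<in>UNIV. c a x1 i * c i j l * (c j y1 k * Q y1 k) * P x1 l)"
    by (rule sum.cong[OF refl], rule sum_move_in4)
  also have "\<dots> = (\<Sum>x1\<in>UNIV. \<Sum>l\<in>UNIV. \<Sum>i\<in>UNIV. \<Sum>j\<in>UNIV. \<Sum>y1\<in>UNIV. \<Sum>k\<in>UNIV. c a x1 i * c i j l * (c j y1 k * Q y1 k) * P x1 l)"
    by (rule sum.cong[OF refl], rule sum_move_in4)
  also have "\<dots> = (\<Sum>x1\<in>UNIV. \<Sum>l\<in>UNIV. (\<Sum>i\<in>UNIV. c a x1 i * (\<Sum>j\<in>UNIV. c i j l * (\<Sum>y1\<in>UNIV. \<Sum>k\<in>UNIV. c j y1 k * Q y1 k))) * P x1 l)"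
    by (simp add: sum_distrib_left sum_distrib_right mult_ac)
  also have "\<dots> = (\<Sum>x1\<in>UNIV. \<Sum>l\<in>UNIV. (\<Sum>i\<in>UNIV. c a x1 i * (\<Sum>j\<in>UNIV. c i j l * (e j * u y))) * P x1 l)"
    unfolding Q_def by (simp only: antipode_right)
  also have "\<dots> = (\<Sum>x1\<in>UNIV. \<Sum>l\<in>UNIV. (\<Sum>i\<in>UNIV. c a x1 i * ((\<Sum>j\<in>UNIV. e j * c i j l) * u y)) * P x1 l)"
    by (simp add: sum_distrib_left sum_distrib_right mult_ac)
  also have "\<dots> = (\<Sum>x1\<in>UNIV. \<Sum>l\<in>UNIV. (c a x1 l * u y) * P x1 l)"
    by (simp add: ec_cc_left)
  also have "\<dots> = (\<Sum>x1\<in>UNIV. \<Sum>l\<in>UNIV. c a x1 l * (\<Sum>x2\<in>UNIV. s l x2 * m x1 x2 x)) * u y"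
    by (simp add: P_def sum_distrib_left sum_distrib_right mult_ac)
  also have "\<dots> = conv_unit a x y"
    by (simp add: antipode_right conv_unit_def mult_ac)
  finally show ?thesis .
qed

lemma comul_antipode_conv_comul: "conv comul_antipode c a x y = conv_unit a x y"
proof -
  have "conv comul_antipode c a x y = (\<Sum>i\<in>UNIV. \<Sum>j\<in>UNIV. c a i j * (\<Sum>p\<in>UNIV. s i p * tmult (c p) (c j) x y))"
    unfolding conv_def comul_antipode_def by (simp add: tmult_sum_left tmult_scale_left)
  also have "\<dots> = (\<Sum>i\<in>UNIV. \<Sum>j\<in>UNIV. \<Sum>p\<in>UNIV. \<Sum>l\<in>UNIV. c a i j * s i p * m p j l * c l x y)"
    by (simp add: tmult_cc sum_distrib_left mult_ac)
  also have "\<dots> = (\<Sum>l\<in>UNIV. \<Sum>i\<in>UNIV. \<Sum>j\<in>UNIV. \<Sum>p\<in>UNIV. c a i j * s i p * m p j l * c l x y)"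
    by (rule sum_move_in3[symmetric])
  also have "\<dots> = (\<Sum>l\<in>UNIV. (\<Sum>i\<in>UNIV. \<Sum>j\<in>UNIV. c a i j * (\<Sum>p\<in>UNIV. s i p * m p j l)) * c l x y)"
    by (simp add: sum_distrib_left sum_distrib_right mult_ac)
  also have "\<dots> = (\<Sum>l\<in>UNIV. e a * (u l * c l x y))"
    by (simp add: antipode_left mult_ac)
  also have "\<dots> = conv_unit a x y"
    by (simp add: conv_unit_def uc_cc flip: sum_distrib_left)
  finally show ?thesis .
qed

(* both sides are convolution inverses of Delta *)
lemma antipode_anti_comul:
  "(\<Sum>p\<in>UNIV. s a p * c p x y) = (\<Sum>i\<in>UNIV. \<Sum>j\<in>UNIV. c a i j * s j x * s i y)"
proof -
  have "comul_antipode a x y = conv comul_antipode conv_unit a x y"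
    by (simp add: conv_unit_right)
  also have "\<dots> = conv comul_antipode (conv c antipode_flip_comul) a x y"
    by (simp add: comul_conv_antipode_flip[abs_def] flip: conv_unit_def[abs_def])
  also have "\<dots> = conv (conv comul_antipode c) antipode_flip_comul a x y"
    by (simp add: conv_assoc)
  also have "\<dots> = conv conv_unit antipode_flip_comul a x y"
    by (simp add: comul_antipode_conv_comul[abs_def] flip: conv_unit_def[abs_def])
  also have "\<dots> = antipode_flip_comul a x y"
    by (simp add: conv_unit_left)
  finally show ?thesis
    by (simp add: comul_antipode_def antipode_flip_comul_def)
qed

lemma fun_id_comul_bvec: "fun_id lam (hcomul H (bvec q)) l = (\<Sum>i\<in>UNIV. lam i * c q i l)"
  by (simp add: hcomul_bvec fun_id_def)

definition is_right_integral :: "('i \<Rightarrow> 'k) \<Rightarrow> bool" where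
  "is_right_integral lam \<longleftrightarrow> (\<forall>q l. (\<Sum>i\<in>UNIV. lam i * c q i l) = lam q * u l)"

lemma is_right_integralI:
  assumes "\<forall>h. fun_id lam (hcomul H h) = vscale (fval lam h) (hone H)"
  shows "is_right_integral lam"
  unfolding is_right_integral_def
proof (intro allI)
  fix q l
  have "fun_id lam (hcomul H (bvec q)) l = vscale (fval lam (bvec q)) (hone H) l"
    using assms by simp
  then show "(\<Sum>i\<in>UNIV. lam i * c q i l) = lam q * u l"
    by (simp add: fun_id_comul_bvec vscale_def hone_def)
qed

(* antipode_pairing lam a b = lam(S(e_a) e_b) *)
definition antipode_pairing :: "('i \<Rightarrow> 'k) \<Rightarrow> 'i \<Rightarrow> 'i \<Rightarrow> 'k" where
  "antipode_pairing lam a b = (\<Sum>t\<in>UNIV. s a t * (\<Sum>n\<in>UNIV. m t b n * lam n))"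

lemma antipode_pairing_mult_unit:
  assumes "is_right_integral lam"
  shows "antipode_pairing lam j b * u w = (\<Sum>i\<in>UNIV. lam i * (\<Sum>p\<in>UNIV. \<Sum>q\<in>UNIV. \<Sum>r\<in>UNIV. \<Sum>v\<in>UNIV. antipode_flip_comul j p q * c b r v * m p r i * m q v w))"
proof -
  have ri: "lam n * u w = (\<Sum>i\<in>UNIV. lam i * c n i w)" for n using assms by (simp add: is_right_integral_def)
  have "antipode_pairing lam j b * u w = (\<Sum>t\<in>UNIV. \<Sum>n\<in>UNIV. s j t * m t b n * (lam n * u w))"
    by (simp add: antipode_pairing_def sum_distrib_left sum_distrib_right mult_ac)
  also have "\<dots> = (\<Sum>t\<in>UNIV. \<Sum>n\<in>UNIV. s j t * m t b n * (\<Sum>i\<in>UNIV. lam i * c n i w))"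
    by (simp only: ri)
  also have "\<dots> = (\<Sum>t\<in>UNIV. \<Sum>n\<in>UNIV. \<Sum>i\<in>UNIV. s j t * m t b n * (lam i * c n i w))"
    by (simp only: sum_distrib_left)
  also have "\<dots> = (\<Sum>i\<in>UNIV. \<Sum>t\<in>UNIV. \<Sum>n\<in>UNIV. s j t * m t b n * (lam i * c n i w))"
    by (rule sum_move_in2[symmetric])
  also have "\<dots> = (\<Sum>i\<in>UNIV. \<Sum>t\<in>UNIV. lam i * s j t * (\<Sum>n\<in>UNIV. m t b n * c n i w))"
    by (simp add: sum_distrib_left mult_ac)
  also have "\<dots> = (\<Sum>i\<in>UNIV. \<Sum>t\<in>UNIV. lam i * s j t * (\<Sum>p\<in>UNIV. \<Sum>q\<in>UNIV. \<Sum>r\<in>UNIV. \<Sum>v\<in>UNIV. c t p q * c b r v * m p r i * m q v w))"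
    by (simp only: cc_mc)
  also have "\<dots> = (\<Sum>i\<in>UNIV. \<Sum>t\<in>UNIV. \<Sum>p\<in>UNIV. \<Sum>q\<in>UNIV. \<Sum>r\<in>UNIV. \<Sum>v\<in>UNIV. lam i * s j t * c t p q * (c b r v * m p r i * m q v w))"
    by (simp add: sum_distrib_left mult_ac)
  also have "\<dots> = (\<Sum>i\<in>UNIV. \<Sum>p\<in>UNIV. \<Sum>t\<in>UNIV. \<Sum>q\<in>UNIV. \<Sum>r\<in>UNIV. \<Sum>v\<in>UNIV. lam i * s j t * c t p q * (c b r v * m p r i * m q v w))"
    by (rule sum.cong[OF refl], rule sum.swap[symmetric])
  also have "\<dots> = (\<Sum>i\<in>UNIV. \<Sum>p\<in>UNIV. \<Sum>q\<in>UNIV. \<Sum>t\<in>UNIV. \<Sum>r\<in>UNIV. \<Sum>v\<in>UNIV. lam i * s j t * c t p q * (c b r v * m p r i * m q v w))"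
    by (rule sum.cong[OF refl], rule sum.cong[OF refl], rule sum.swap[symmetric])
  also have "\<dots> = (\<Sum>i\<in>UNIV. \<Sum>p\<in>UNIV. \<Sum>q\<in>UNIV. \<Sum>r\<in>UNIV. \<Sum>t\<in>UNIV. \<Sum>v\<in>UNIV. lam i * s j t * c t p q * (c b r v * m p r i * m q v w))"
    by (rule sum.cong[OF refl], rule sum.cong[OF refl], rule sum.cong[OF refl], rule sum.swap[symmetric])
  also have "\<dots> = (\<Sum>i\<in>UNIV. \<Sum>p\<in>UNIV. \<Sum>q\<in>UNIV. \<Sum>r\<in>UNIV. \<Sum>v\<in>UNIV. \<Sum>t\<in>UNIV. lam i * s j t * c t p q * (c b r v * m p r i * m q v w))"
    by (rule sum.cong[OF refl], rule sum.cong[OF refl], rule sum.cong[OF refl], rule sum.cong[OF refl], rule sum.swap[symmetric])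
  also have "\<dots> = (\<Sum>i\<in>UNIV. \<Sum>p\<in>UNIV. \<Sum>q\<in>UNIV. \<Sum>r\<in>UNIV. \<Sum>v\<in>UNIV. lam i * (\<Sum>t\<in>UNIV. s j t * c t p q) * (c b r v * m p r i * m q v w))"
    by (simp add: sum_distrib_left sum_distrib_right mult_ac)
  also have "\<dots> = (\<Sum>i\<in>UNIV. \<Sum>p\<in>UNIV. \<Sum>q\<in>UNIV. \<Sum>r\<in>UNIV. \<Sum>v\<in>UNIV. lam i * antipode_flip_comul j p q * (c b r v * m p r i * m q v w))"
    by (simp only: antipode_anti_comul antipode_flip_comul_def[symmetric])
  also have "\<dots> = (\<Sum>i\<in>UNIV. lam i * (\<Sum>p\<in>UNIV. \<Sum>q\<in>UNIV. \<Sum>r\<in>UNIV. \<Sum>v\<in>UNIV. antipode_flip_comul j p q * c b r v * m p r i * m q v w))"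
    by (simp add: sum_distrib_left mult_ac)
  finally show ?thesis .
qed

lemma antipode_conjugation_delta:
  "(\<Sum>j\<in>UNIV. \<Sum>l2\<in>UNIV. \<Sum>g\<in>UNIV. \<Sum>q\<in>UNIV. \<Sum>w\<in>UNIV. (c a l2 j * c j g h) * s g q * (m q v w * m l2 w l))
    = (if a = h then 1 else 0) * (if v = l then 1 else 0)"
proof -
  have "(\<Sum>j\<in>UNIV. \<Sum>l2\<in>UNIV. \<Sum>g\<in>UNIV. \<Sum>q\<in>UNIV. \<Sum>w\<in>UNIV. (c a l2 j * c j g h) * s g q * (m q v w * m l2 w l)) = (\<Sum>l2\<in>UNIV. \<Sum>j\<in>UNIV. \<Sum>g\<in>UNIV. \<Sum>q\<in>UNIV. \<Sum>w\<in>UNIV. (c a l2 j * c j g h) * s g q * (m q v w * m l2 w l))"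
    by (rule sum.swap[symmetric])
  also have "\<dots> = (\<Sum>l2\<in>UNIV. \<Sum>g\<in>UNIV. \<Sum>j\<in>UNIV. \<Sum>q\<in>UNIV. \<Sum>w\<in>UNIV. (c a l2 j * c j g h) * s g q * (m q v w * m l2 w l))"
    by (rule sum.cong[OF refl], rule sum.swap[symmetric])
  also have "\<dots> = (\<Sum>l2\<in>UNIV. \<Sum>g\<in>UNIV. \<Sum>q\<in>UNIV. \<Sum>j\<in>UNIV. \<Sum>w\<in>UNIV. (c a l2 j * c j g h) * s g q * (m q v w * m l2 w l))"
    by (rule sum.cong[OF refl], rule sum.cong[OF refl], rule sum.swap[symmetric])
  also have "\<dots> = (\<Sum>l2\<in>UNIV. \<Sum>g\<in>UNIV. \<Sum>q\<in>UNIV. (\<Sum>j\<in>UNIV. c a l2 j * c j g h) * s g q * (\<Sum>w\<in>UNIV. m q v w * m l2 w l))"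
    by (simp only: sum_product_scaled)
  also have "\<dots> = (\<Sum>l2\<in>UNIV. \<Sum>g\<in>UNIV. \<Sum>q\<in>UNIV. (\<Sum>j\<in>UNIV. c a j h * c j l2 g) * s g q * (\<Sum>w\<in>UNIV. m l2 q w * m w v l))"
    by (simp only: cc_coassoc[symmetric] mc_assoc[symmetric])
  also have "\<dots> = (\<Sum>l2\<in>UNIV. \<Sum>g\<in>UNIV. \<Sum>q\<in>UNIV. \<Sum>j\<in>UNIV. \<Sum>w\<in>UNIV. (c a j h * c j l2 g) * s g q * (m l2 q w * m w v l))"
    by (simp only: sum_product_scaled)
  also have "\<dots> = (\<Sum>j\<in>UNIV. \<Sum>l2\<in>UNIV. \<Sum>g\<in>UNIV. \<Sum>q\<in>UNIV. \<Sum>w\<in>UNIV. (c a j h * c j l2 g) * s g q * (m l2 q w * m w v l))"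
    by (rule sum_move_in3[symmetric])
  also have "\<dots> = (\<Sum>j\<in>UNIV. \<Sum>w\<in>UNIV. \<Sum>l2\<in>UNIV. \<Sum>g\<in>UNIV. \<Sum>q\<in>UNIV. (c a j h * c j l2 g) * s g q * (m l2 q w * m w v l))"
    by (rule sum.cong[OF refl], rule sum_move_in3[symmetric])
  also have "\<dots> = (\<Sum>j\<in>UNIV. \<Sum>w\<in>UNIV. (c a j h * m w v l) * (\<Sum>l2\<in>UNIV. \<Sum>g\<in>UNIV. c j l2 g * (\<Sum>q\<in>UNIV. s g q * m l2 q w)))"
    by (simp add: sum_distrib_left mult_ac)
  also have "\<dots> = (\<Sum>j\<in>UNIV. \<Sum>w\<in>UNIV. (c a j h * m w v l) * (e j * u w))"
    by (simp only: antipode_right)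
  also have "\<dots> = (\<Sum>j\<in>UNIV. e j * c a j h) * (\<Sum>w\<in>UNIV. u w * m w v l)"
    by (simp only: sum_product) (simp add: mult_ac)
  also have "\<dots> = (if a = h then 1 else 0) * (if v = l then 1 else 0)"
    by (simp add: ec_cc_left uc_mc_left)
  finally show ?thesis .
qed

lemma antipode_pairing_comul:
  assumes "is_right_integral lam"
  shows "(\<Sum>j\<in>UNIV. c b j l * antipode_pairing lam a j) = (\<Sum>j\<in>UNIV. c a l j * antipode_pairing lam j b)"
proof -
  have "(\<Sum>j\<in>UNIV. c a l j * antipode_pairing lam j b) = (\<Sum>j\<in>UNIV. (\<Sum>l2\<in>UNIV. c a l2 j * (\<Sum>w\<in>UNIV. u w * m l2 w l)) * antipode_pairing lam j b)"
    by (simp add: uc_mc_right)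
  also have "\<dots> = (\<Sum>j\<in>UNIV. \<Sum>l2\<in>UNIV. \<Sum>w\<in>UNIV. c a l2 j * m l2 w l * (antipode_pairing lam j b * u w))"
    by (simp add: sum_distrib_left sum_distrib_right mult_ac)
  also have "\<dots> = (\<Sum>j\<in>UNIV. \<Sum>l2\<in>UNIV. \<Sum>w\<in>UNIV. c a l2 j * m l2 w l * (\<Sum>i\<in>UNIV. lam i * (\<Sum>p\<in>UNIV. \<Sum>q\<in>UNIV. \<Sum>r\<in>UNIV. \<Sum>v\<in>UNIV. antipode_flip_comul j p q * c b r v * m p r i * m q v w)))"
    by (simp only: antipode_pairing_mult_unit[OF assms])
  also have "\<dots> = (\<Sum>j\<in>UNIV. \<Sum>l2\<in>UNIV. \<Sum>w\<in>UNIV. \<Sum>i\<in>UNIV. \<Sum>p\<in>UNIV. \<Sum>q\<in>UNIV. \<Sum>r\<in>UNIV. \<Sum>v\<in>UNIV. \<Sum>g\<in>UNIV. \<Sum>h\<in>UNIV. ((c a l2 j * c j g h) * s g q * (m q v w * m l2 w l)) * (s h p * c b r v * m p r i * lam i))"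
    by (simp add: antipode_flip_comul_def sum_distrib_left sum_distrib_right mult_ac)
  also have "\<dots> = (\<Sum>h\<in>UNIV. \<Sum>j\<in>UNIV. \<Sum>l2\<in>UNIV. \<Sum>w\<in>UNIV. \<Sum>i\<in>UNIV. \<Sum>p\<in>UNIV. \<Sum>q\<in>UNIV. \<Sum>r\<in>UNIV. \<Sum>v\<in>UNIV. \<Sum>g\<in>UNIV. ((c a l2 j * c j g h) * s g q * (m q v w * m l2 w l)) * (s h p * c b r v * m p r i * lam i))"
    by (rule sum_move_in9[symmetric])
  also have "\<dots> = (\<Sum>h\<in>UNIV. \<Sum>v\<in>UNIV. \<Sum>j\<in>UNIV. \<Sum>l2\<in>UNIV. \<Sum>w\<in>UNIV. \<Sum>i\<in>UNIV. \<Sum>p\<in>UNIV. \<Sum>q\<in>UNIV. \<Sum>r\<in>UNIV. \<Sum>g\<in>UNIV. ((c a l2 j * c j g h) * s g q * (m q v w * m l2 w l)) * (s h p * c b r v * m p r i * lam i))"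
    by (rule sum.cong[OF refl], rule sum_move_in7[symmetric])
  also have "\<dots> = (\<Sum>h\<in>UNIV. \<Sum>v\<in>UNIV. \<Sum>p\<in>UNIV. \<Sum>j\<in>UNIV. \<Sum>l2\<in>UNIV. \<Sum>w\<in>UNIV. \<Sum>i\<in>UNIV. \<Sum>q\<in>UNIV. \<Sum>r\<in>UNIV. \<Sum>g\<in>UNIV. ((c a l2 j * c j g h) * s g q * (m q v w * m l2 w l)) * (s h p * c b r v * m p r i * lam i))"
    by (rule sum.cong[OF refl], rule sum.cong[OF refl], rule sum_move_in4[symmetric])
  also have "\<dots> = (\<Sum>h\<in>UNIV. \<Sum>v\<in>UNIV. \<Sum>p\<in>UNIV. \<Sum>r\<in>UNIV. \<Sum>j\<in>UNIV. \<Sum>l2\<in>UNIV. \<Sum>w\<in>UNIV. \<Sum>i\<in>UNIV. \<Sum>q\<in>UNIV. \<Sum>g\<in>UNIV. ((c a l2 j * c j g h) * s g q * (m q v w * m l2 w l)) * (s h p * c b r v * m p r i * lam i))"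
    by (rule sum.cong[OF refl], rule sum.cong[OF refl], rule sum.cong[OF refl], rule sum_move_in5[symmetric])
  also have "\<dots> = (\<Sum>h\<in>UNIV. \<Sum>v\<in>UNIV. \<Sum>p\<in>UNIV. \<Sum>r\<in>UNIV. \<Sum>i\<in>UNIV. \<Sum>j\<in>UNIV. \<Sum>l2\<in>UNIV. \<Sum>w\<in>UNIV. \<Sum>q\<in>UNIV. \<Sum>g\<in>UNIV. ((c a l2 j * c j g h) * s g q * (m q v w * m l2 w l)) * (s h p * c b r v * m p r i * lam i))"
    by (rule sum.cong[OF refl], rule sum.cong[OF refl], rule sum.cong[OF refl], rule sum.cong[OF refl], rule sum_move_in3[symmetric])
  also have "\<dots> = (\<Sum>h\<in>UNIV. \<Sum>v\<in>UNIV. \<Sum>p\<in>UNIV. \<Sum>r\<in>UNIV. \<Sum>i\<in>UNIV. \<Sum>j\<in>UNIV. \<Sum>l2\<in>UNIV. \<Sum>g\<in>UNIV. \<Sum>w\<in>UNIV. \<Sum>q\<in>UNIV. ((c a l2 j * c j g h) * s g q * (m q v w * m l2 w l)) * (s h p * c b r v * m p r i * lam i))"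
    by (rule sum.cong[OF refl], rule sum.cong[OF refl], rule sum.cong[OF refl], rule sum.cong[OF refl], rule sum.cong[OF refl], rule sum.cong[OF refl], rule sum.cong[OF refl], rule sum_move_in2[symmetric])
  also have "\<dots> = (\<Sum>h\<in>UNIV. \<Sum>v\<in>UNIV. \<Sum>p\<in>UNIV. \<Sum>r\<in>UNIV. \<Sum>i\<in>UNIV. \<Sum>j\<in>UNIV. \<Sum>l2\<in>UNIV. \<Sum>g\<in>UNIV. \<Sum>q\<in>UNIV. \<Sum>w\<in>UNIV. ((c a l2 j * c j g h) * s g q * (m q v w * m l2 w l)) * (s h p * c b r v * m p r i * lam i))"
    by (rule sum.cong[OF refl], rule sum.cong[OF refl], rule sum.cong[OF refl], rule sum.cong[OF refl], rule sum.cong[OF refl], rule sum.cong[OF refl], rule sum.cong[OF refl], rule sum.cong[OF refl], rule sum.swap[symmetric])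
  also have "\<dots> = (\<Sum>h\<in>UNIV. \<Sum>v\<in>UNIV. \<Sum>p\<in>UNIV. \<Sum>r\<in>UNIV. \<Sum>i\<in>UNIV. (\<Sum>j\<in>UNIV. \<Sum>l2\<in>UNIV. \<Sum>g\<in>UNIV. \<Sum>q\<in>UNIV. \<Sum>w\<in>UNIV. (c a l2 j * c j g h) * s g q * (m q v w * m l2 w l)) * (s h p * c b r v * m p r i * lam i))"
    by (simp only: sum_distrib_right)
  also have "\<dots> = (\<Sum>h\<in>UNIV. \<Sum>v\<in>UNIV. \<Sum>p\<in>UNIV. \<Sum>r\<in>UNIV. \<Sum>i\<in>UNIV. ((if a = h then 1 else 0) * (if v = l then 1 else 0)) * (s h p * c b r v * m p r i * lam i))"
    by (simp only: antipode_conjugation_delta)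
  also have "\<dots> = (\<Sum>p\<in>UNIV. \<Sum>r\<in>UNIV. \<Sum>i\<in>UNIV. s a p * c b r l * m p r i * lam i)"
    by simp
  also have "\<dots> = (\<Sum>r\<in>UNIV. \<Sum>p\<in>UNIV. \<Sum>i\<in>UNIV. s a p * c b r l * m p r i * lam i)"
    by (rule sum.swap)
  also have "\<dots> = (\<Sum>j\<in>UNIV. c b j l * antipode_pairing lam a j)"
    by (simp add: antipode_pairing_def sum_distrib_left mult_ac)
  finally show ?thesis by simp
qed

lemma antipode_pairing_comul_sum:
  assumes "is_right_integral lam"
  shows "(\<Sum>j\<in>UNIV. (\<Sum>a\<in>UNIV. h a * c a l j) * antipode_pairing lam j b) = (\<Sum>j\<in>UNIV. c b j l * (\<Sum>a\<in>UNIV. h a * antipode_pairing lam a j))"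
proof -
  have "(\<Sum>j\<in>UNIV. (\<Sum>a\<in>UNIV. h a * c a l j) * antipode_pairing lam j b) = (\<Sum>j\<in>UNIV. \<Sum>a\<in>UNIV. h a * (c a l j * antipode_pairing lam j b))"
    by (simp only: sum_distrib_right) (simp add: mult_ac)
  also have "\<dots> = (\<Sum>a\<in>UNIV. \<Sum>j\<in>UNIV. h a * (c a l j * antipode_pairing lam j b))"
    by (rule sum.swap)
  also have "\<dots> = (\<Sum>a\<in>UNIV. h a * (\<Sum>j\<in>UNIV. c a l j * antipode_pairing lam j b))"
    by (simp only: sum_distrib_left)
  also have "\<dots> = (\<Sum>a\<in>UNIV. h a * (\<Sum>j\<in>UNIV. c b j l * antipode_pairing lam a j))"
    by (simp only: antipode_pairing_comul[OF assms])
  also have "\<dots> = (\<Sum>a\<in>UNIV. \<Sum>j\<in>UNIV. h a * (c b j l * antipode_pairing lam a j))"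
    by (simp only: sum_distrib_left)
  also have "\<dots> = (\<Sum>j\<in>UNIV. \<Sum>a\<in>UNIV. h a * (c b j l * antipode_pairing lam a j))"
    by (rule sum.swap)
  also have "\<dots> = (\<Sum>j\<in>UNIV. c b j l * (\<Sum>a\<in>UNIV. h a * antipode_pairing lam a j))"
    by (simp add: sum_distrib_left mult_ac)
  finally show ?thesis .
qed

definition antipode_sq :: "'i \<Rightarrow> 'i \<Rightarrow> 'k" where
  "antipode_sq i p = (\<Sum>y\<in>UNIV. s i y * s y p)"

lemma antipode_sq_comul:
  "(\<Sum>i\<in>UNIV. \<Sum>j\<in>UNIV. c a i j * (\<Sum>x\<in>UNIV. \<Sum>p\<in>UNIV. s j x * antipode_sq i p * m x p n)) = e a * u n"
proof -
  have inner: "(\<Sum>x\<in>UNIV. \<Sum>p\<in>UNIV. s j x * antipode_sq i p * m x p n)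
      = (\<Sum>x\<in>UNIV. \<Sum>y\<in>UNIV. \<Sum>p\<in>UNIV. s j x * (s i y * s y p) * m x p n)" for i j
    by (simp add: antipode_sq_def sum_distrib_left sum_distrib_right mult_ac)
      (rule sum.cong[OF refl], rule sum.swap)
  have "(\<Sum>i\<in>UNIV. \<Sum>j\<in>UNIV. c a i j * (\<Sum>x\<in>UNIV. \<Sum>p\<in>UNIV. s j x * antipode_sq i p * m x p n))
      = (\<Sum>i\<in>UNIV. \<Sum>j\<in>UNIV. \<Sum>x\<in>UNIV. \<Sum>y\<in>UNIV. c a i j * (\<Sum>p\<in>UNIV. s j x * (s i y * s y p) * m x p n))"
    by (simp add: inner sum_distrib_left)
  also have "\<dots> = (\<Sum>x\<in>UNIV. \<Sum>y\<in>UNIV. \<Sum>i\<in>UNIV. \<Sum>j\<in>UNIV. c a i j * (\<Sum>p\<in>UNIV. s j x * (s i y * s y p) * m x p n))"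
    by (subst (1 2) sum_move_in3) (rule refl)
  also have "\<dots> = (\<Sum>x\<in>UNIV. \<Sum>y\<in>UNIV. (\<Sum>i\<in>UNIV. \<Sum>j\<in>UNIV. c a i j * s j x * s i y) * (\<Sum>p\<in>UNIV. s y p * m x p n))"
    by (simp add: sum_distrib_left sum_distrib_right mult_ac)
  also have "\<dots> = (\<Sum>x\<in>UNIV. \<Sum>y\<in>UNIV. (\<Sum>q\<in>UNIV. s a q * c q x y) * (\<Sum>p\<in>UNIV. s y p * m x p n))"
    by (simp only: antipode_anti_comul)
  also have "\<dots> = (\<Sum>q\<in>UNIV. s a q * (\<Sum>x\<in>UNIV. \<Sum>y\<in>UNIV. c q x y * (\<Sum>p\<in>UNIV. s y p * m x p n)))"
    by (simp add: sum_distrib_left sum_distrib_right mult_ac) (rule sum_move_in2[symmetric])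
  also have "\<dots> = e a * u n"
    by (simp only: antipode_right) (simp add: ec_antipode flip: mult.assoc sum_distrib_right)
  finally show ?thesis .
qed

(* coordinates of S\<^sup>2(e_i) e_z *)
definition antipode_sq_mult :: "'i \<Rightarrow> 'i \<Rightarrow> 'i \<Rightarrow> 'k" where
  "antipode_sq_mult z0 i n = (\<Sum>p\<in>UNIV. antipode_sq i p * m p z0 n)"

lemma antipode_pairing_expand:
  "antipode_sq_mult z0 i n * antipode_pairing lam j n
    = (\<Sum>p\<in>UNIV. \<Sum>x\<in>UNIV. \<Sum>r\<in>UNIV. (antipode_sq i p * m p z0 n) * (s j x * (m x n r * lam r)))"
  unfolding antipode_sq_mult_def antipode_pairing_def by (simp only: sum_product) (simp only: sum_distrib_left)

lemma counit_integral_expand: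
  "e k * lam z0
    = (\<Sum>i\<in>UNIV. \<Sum>j\<in>UNIV. c k i j * (\<Sum>n\<in>UNIV. antipode_sq_mult z0 i n * antipode_pairing lam j n))"
proof -
  have "(\<Sum>i\<in>UNIV. \<Sum>j\<in>UNIV. c k i j * (\<Sum>n\<in>UNIV. antipode_sq_mult z0 i n * antipode_pairing lam j n)) = (\<Sum>i\<in>UNIV. \<Sum>j\<in>UNIV. \<Sum>n\<in>UNIV. \<Sum>p\<in>UNIV. \<Sum>x\<in>UNIV. \<Sum>r\<in>UNIV. c k i j * ((antipode_sq i p * m p z0 n) * (s j x * (m x n r * lam r))))"
    by (simp only: antipode_pairing_expand sum_distrib_left)
  also have "\<dots> = (\<Sum>i\<in>UNIV. \<Sum>j\<in>UNIV. \<Sum>p\<in>UNIV. \<Sum>n\<in>UNIV. \<Sum>x\<in>UNIV. \<Sum>r\<in>UNIV. c k i j * ((antipode_sq i p * m p z0 n) * (s j x * (m x n r * lam r))))"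
    by (rule sum.cong[OF refl], rule sum.cong[OF refl], rule sum.swap[symmetric])
  also have "\<dots> = (\<Sum>i\<in>UNIV. \<Sum>j\<in>UNIV. \<Sum>p\<in>UNIV. \<Sum>x\<in>UNIV. \<Sum>n\<in>UNIV. \<Sum>r\<in>UNIV. c k i j * ((antipode_sq i p * m p z0 n) * (s j x * (m x n r * lam r))))"
    by (rule sum.cong[OF refl], rule sum.cong[OF refl], rule sum.cong[OF refl], rule sum.swap[symmetric])
  also have "\<dots> = (\<Sum>i\<in>UNIV. \<Sum>j\<in>UNIV. \<Sum>p\<in>UNIV. \<Sum>x\<in>UNIV. \<Sum>r\<in>UNIV. \<Sum>n\<in>UNIV. c k i j * ((antipode_sq i p * m p z0 n) * (s j x * (m x n r * lam r))))"
    by (rule sum.cong[OF refl], rule sum.cong[OF refl], rule sum.cong[OF refl], rule sum.cong[OF refl], rule sum.swap[symmetric])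
  also have "\<dots> = (\<Sum>i\<in>UNIV. \<Sum>j\<in>UNIV. \<Sum>p\<in>UNIV. \<Sum>x\<in>UNIV. \<Sum>r\<in>UNIV. \<Sum>n\<in>UNIV. (c k i j * antipode_sq i p * s j x * lam r) * (m p z0 n * m x n r))"
    by (simp add: mult_ac)
  also have "\<dots> = (\<Sum>i\<in>UNIV. \<Sum>j\<in>UNIV. \<Sum>p\<in>UNIV. \<Sum>x\<in>UNIV. \<Sum>r\<in>UNIV. (c k i j * antipode_sq i p * s j x * lam r) * (\<Sum>n\<in>UNIV. m p z0 n * m x n r))"
    by (simp only: sum_distrib_left)
  also have "\<dots> = (\<Sum>i\<in>UNIV. \<Sum>j\<in>UNIV. \<Sum>p\<in>UNIV. \<Sum>x\<in>UNIV. \<Sum>r\<in>UNIV. (c k i j * antipode_sq i p * s j x * lam r) * (\<Sum>n\<in>UNIV. m x p n * m n z0 r))"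
    by (simp only: mc_assoc[symmetric])
  also have "\<dots> = (\<Sum>i\<in>UNIV. \<Sum>j\<in>UNIV. \<Sum>p\<in>UNIV. \<Sum>x\<in>UNIV. \<Sum>r\<in>UNIV. \<Sum>n\<in>UNIV. (c k i j * antipode_sq i p * s j x * lam r) * (m x p n * m n z0 r))"
    by (simp only: sum_distrib_left)
  also have "\<dots> = (\<Sum>n\<in>UNIV. \<Sum>i\<in>UNIV. \<Sum>j\<in>UNIV. \<Sum>p\<in>UNIV. \<Sum>x\<in>UNIV. \<Sum>r\<in>UNIV. (c k i j * antipode_sq i p * s j x * lam r) * (m x p n * m n z0 r))"
    by (rule sum_move_in5[symmetric])
  also have "\<dots> = (\<Sum>n\<in>UNIV. \<Sum>r\<in>UNIV. \<Sum>i\<in>UNIV. \<Sum>j\<in>UNIV. \<Sum>p\<in>UNIV. \<Sum>x\<in>UNIV. (c k i j * antipode_sq i p * s j x * lam r) * (m x p n * m n z0 r))"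
    by (rule sum.cong[OF refl], rule sum_move_in4[symmetric])
  also have "\<dots> = (\<Sum>n\<in>UNIV. \<Sum>r\<in>UNIV. \<Sum>i\<in>UNIV. \<Sum>j\<in>UNIV. \<Sum>x\<in>UNIV. \<Sum>p\<in>UNIV. (c k i j * antipode_sq i p * s j x * lam r) * (m x p n * m n z0 r))"
    by (rule sum.cong[OF refl], rule sum.cong[OF refl], rule sum.cong[OF refl], rule sum.cong[OF refl], rule sum.swap[symmetric])
  also have "\<dots> = (\<Sum>n\<in>UNIV. \<Sum>r\<in>UNIV. (\<Sum>i\<in>UNIV. \<Sum>j\<in>UNIV. c k i j * (\<Sum>x\<in>UNIV. \<Sum>p\<in>UNIV. s j x * antipode_sq i p * m x p n)) * (m n z0 r * lam r))"
    by (simp only: sum_distrib_left sum_distrib_right) (simp add: mult_ac)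
  also have "\<dots> = (\<Sum>n\<in>UNIV. \<Sum>r\<in>UNIV. (e k * u n) * (m n z0 r * lam r))"
    by (simp only: antipode_sq_comul)
  also have "\<dots> = (\<Sum>r\<in>UNIV. \<Sum>n\<in>UNIV. (e k * u n) * (m n z0 r * lam r))"
    by (rule sum.swap)
  also have "\<dots> = e k * (\<Sum>r\<in>UNIV. (\<Sum>n\<in>UNIV. u n * m n z0 r) * lam r)"
    by (simp add: sum_distrib_left sum_distrib_right mult_ac)
  also have "\<dots> = e k * lam z0"
    by (simp add: uc_mc_left)
  finally show ?thesis by simp
qed

(* h is recovered from h_1 \<otimes> lam(S(h_2) _) because S(k_2) S\<^sup>2(k_1) = epsilon(k) 1 *)
lemma antipode_pairing_nondegenerate:
  assumes ri: "is_right_integral lam" and nz: "lam z0 \<noteq> 0"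
    and hyp: "\<forall>b. (\<Sum>a\<in>UNIV. h a * antipode_pairing lam a b) = 0"
  shows "h l = 0"
proof -
  have hyp1: "(\<Sum>j\<in>UNIV. (\<Sum>a\<in>UNIV. h a * c a l j) * antipode_pairing lam j b) = 0" for l b
    using hyp by (simp add: antipode_pairing_comul_sum[OF ri])
  have hyp2: "(\<Sum>j2\<in>UNIV. (\<Sum>j\<in>UNIV. (\<Sum>a\<in>UNIV. h a * c a l j) * c j i j2) * antipode_pairing lam j2 n) = 0" for i n
    using hyp1[of l] by (simp add: antipode_pairing_comul_sum[OF ri, of "\<lambda>j. (\<Sum>a\<in>UNIV. h a * c a l j)"])
  have "h l * lam z0 = (\<Sum>a\<in>UNIV. h a * (\<Sum>k\<in>UNIV. c a l k * e k)) * lam z0"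
    by (simp add: ec_cc_right)
  also have "\<dots> = (\<Sum>a\<in>UNIV. h a * (\<Sum>k\<in>UNIV. c a l k * (e k * lam z0)))"
    by (simp add: sum_distrib_left sum_distrib_right mult_ac)
  also have "\<dots> = (\<Sum>a\<in>UNIV. h a * (\<Sum>k\<in>UNIV. c a l k * (\<Sum>i\<in>UNIV. \<Sum>j\<in>UNIV. c k i j * (\<Sum>n\<in>UNIV. antipode_sq_mult z0 i n * antipode_pairing lam j n))))"
    by (simp only: counit_integral_expand[symmetric])
  also have "\<dots> = (\<Sum>a\<in>UNIV. \<Sum>k\<in>UNIV. \<Sum>i\<in>UNIV. \<Sum>j\<in>UNIV. \<Sum>n\<in>UNIV. h a * c a l k * c k i j * (antipode_sq_mult z0 i n * antipode_pairing lam j n))"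
    by (simp add: sum_distrib_left mult_ac)
  also have "\<dots> = (\<Sum>i\<in>UNIV. \<Sum>a\<in>UNIV. \<Sum>k\<in>UNIV. \<Sum>j\<in>UNIV. \<Sum>n\<in>UNIV. h a * c a l k * c k i j * (antipode_sq_mult z0 i n * antipode_pairing lam j n))"
    by (rule sum_move_in2[symmetric])
  also have "\<dots> = (\<Sum>i\<in>UNIV. \<Sum>n\<in>UNIV. \<Sum>a\<in>UNIV. \<Sum>k\<in>UNIV. \<Sum>j\<in>UNIV. h a * c a l k * c k i j * (antipode_sq_mult z0 i n * antipode_pairing lam j n))"
    by (rule sum.cong[OF refl], rule sum_move_in3[symmetric])
  also have "\<dots> = (\<Sum>i\<in>UNIV. \<Sum>n\<in>UNIV. \<Sum>j\<in>UNIV. \<Sum>a\<in>UNIV. \<Sum>k\<in>UNIV. h a * c a l k * c k i j * (antipode_sq_mult z0 i n * antipode_pairing lam j n))"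
    by (rule sum.cong[OF refl], rule sum.cong[OF refl], rule sum_move_in2[symmetric])
  also have "\<dots> = (\<Sum>i\<in>UNIV. \<Sum>n\<in>UNIV. \<Sum>j\<in>UNIV. \<Sum>k\<in>UNIV. \<Sum>a\<in>UNIV. h a * c a l k * c k i j * (antipode_sq_mult z0 i n * antipode_pairing lam j n))"
    by (rule sum.cong[OF refl], rule sum.cong[OF refl], rule sum.cong[OF refl], rule sum.swap[symmetric])
  also have "\<dots> = (\<Sum>i\<in>UNIV. \<Sum>n\<in>UNIV. \<Sum>j\<in>UNIV. \<Sum>k\<in>UNIV. \<Sum>a\<in>UNIV. antipode_sq_mult z0 i n * (((h a * c a l k) * c k i j) * antipode_pairing lam j n))"
    by (simp add: mult_ac)
  also have "\<dots> = (\<Sum>i\<in>UNIV. \<Sum>n\<in>UNIV. antipode_sq_mult z0 i n * (\<Sum>j\<in>UNIV. (\<Sum>k\<in>UNIV. (\<Sum>a\<in>UNIV. h a * c a l k) * c k i j) * antipode_pairing lam j n))"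
    by (simp only: sum_distrib_left sum_distrib_right)
  also have "\<dots> = 0" by (simp add: hyp2)
  finally show ?thesis using nz by simp
qed

lemma antipode_pairing_surj:
  assumes ri: "is_right_integral lam" and nz: "lam z0 \<noteq> 0"
  shows "surj (\<lambda>g b. \<Sum>a\<in>UNIV. g a * antipode_pairing lam a b)"
proof (rule linear_inj_imp_surj_vec)
  show "(\<lambda>b. \<Sum>a\<in>UNIV. (x + y) a * antipode_pairing lam a b) = (\<lambda>b. \<Sum>a\<in>UNIV. x a * antipode_pairing lam a b) + (\<lambda>b. \<Sum>a\<in>UNIV. y a * antipode_pairing lam a b)" for x y
    by (simp add: fun_eq_iff algebra_simps sum.distrib)
  show "(\<lambda>b. \<Sum>a\<in>UNIV. vscale c x a * antipode_pairing lam a b) = vscale c (\<lambda>b. \<Sum>a\<in>UNIV. x a * antipode_pairing lam a b)" for c x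
    by (simp add: fun_eq_iff vscale_def sum_distrib_left mult_ac)
  show "inj (\<lambda>g b. \<Sum>a\<in>UNIV. g a * antipode_pairing lam a b)"
  proof (rule injI)
    fix x y :: "'i \<Rightarrow> 'k"
    assume eq: "(\<lambda>b. \<Sum>a\<in>UNIV. x a * antipode_pairing lam a b) = (\<lambda>b. \<Sum>a\<in>UNIV. y a * antipode_pairing lam a b)"
    have "(\<lambda>a. x a - y a) l = 0" for l
    proof (rule antipode_pairing_nondegenerate[OF ri nz], rule allI)
      fix b
      have "(\<Sum>a\<in>UNIV. x a * antipode_pairing lam a b) = (\<Sum>a\<in>UNIV. y a * antipode_pairing lam a b)" using eq by metis
      then show "(\<Sum>a\<in>UNIV. (x a - y a) * antipode_pairing lam a b) = 0"
        by (simp add: algebra_simps sum_subtractf)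
    qed
    then show "x = y" by (simp add: fun_eq_iff)
  qed
qed

lemma antipode_pairing_unit: "(\<Sum>a\<in>UNIV. u a * antipode_pairing lam a b) = lam b"
proof -
  have "(\<Sum>a\<in>UNIV. u a * antipode_pairing lam a b)
      = (\<Sum>a\<in>UNIV. \<Sum>t\<in>UNIV. u a * s a t * (\<Sum>n\<in>UNIV. m t b n * lam n))"
    by (simp add: antipode_pairing_def sum_distrib_left mult_ac)
  also have "\<dots> = (\<Sum>t\<in>UNIV. u t * (\<Sum>n\<in>UNIV. m t b n * lam n))"
    by (subst sum.swap) (simp add: uc_antipode flip: sum_distrib_right)
  also have "\<dots> = (\<Sum>n\<in>UNIV. (\<Sum>t\<in>UNIV. u t * m t b n) * lam n)"
    by (simp add: sum_distrib_left sum_distrib_right mult_ac) (rule sum.swap)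
  also have "\<dots> = lam b"
    by (simp add: uc_mc_left)
  finally show ?thesis .
qed

lemma right_integral_pairing_comul:
  assumes ri: "is_right_integral lam" and nz: "lam z \<noteq> 0" and ri': "is_right_integral lam'"
    and rep: "\<And>b. lam' b = (\<Sum>a\<in>UNIV. g a * antipode_pairing lam a b)"
  shows "(\<Sum>a\<in>UNIV. g a * c a l j) = u l * g j"
proof -
  have "(\<lambda>j. (\<Sum>a\<in>UNIV. g a * c a l j) - u l * g j) j = 0"
  proof (rule antipode_pairing_nondegenerate[OF ri nz], rule allI)
    fix b
    have "(\<Sum>a\<in>UNIV. ((\<Sum>a'\<in>UNIV. g a' * c a' l a) - u l * g a) * antipode_pairing lam a b)
        = (\<Sum>a\<in>UNIV. (\<Sum>a'\<in>UNIV. g a' * c a' l a) * antipode_pairing lam a b) - u l * lam' b"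
      by (simp add: algebra_simps sum_subtractf sum_distrib_left rep)
    also have "\<dots> = (\<Sum>j\<in>UNIV. c b j l * lam' j) - u l * lam' b"
      by (simp add: antipode_pairing_comul_sum[OF ri] rep)
    also have "\<dots> = 0"
      using ri' by (simp add: is_right_integral_def mult.commute)
    finally show "(\<Sum>a\<in>UNIV. ((\<lambda>j. (\<Sum>a'\<in>UNIV. g a' * c a' l j) - u l * g j) a) * antipode_pairing lam a b) = 0"
      by simp
  qed
  then show ?thesis
    by simp
qed

lemma right_integral_eq_scaled:
  assumes "is_right_integral lam" and "lam z \<noteq> 0" and "is_right_integral lam'"
    and rep: "\<And>b. lam' b = (\<Sum>a\<in>UNIV. g a * antipode_pairing lam a b)"
  shows "lam' b = (\<Sum>a\<in>UNIV. g a * e a) * lam b"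
proof -
  have g: "g l = u l * (\<Sum>a\<in>UNIV. g a * e a)" for l
  proof -
    have "g l = (\<Sum>a\<in>UNIV. g a * (\<Sum>j\<in>UNIV. c a l j * e j))"
      by (simp add: ec_cc_right)
    also have "\<dots> = (\<Sum>j\<in>UNIV. (\<Sum>a\<in>UNIV. g a * c a l j) * e j)"
      by (simp add: sum_distrib_left sum_distrib_right mult_ac) (rule sum.swap)
    also have "\<dots> = u l * (\<Sum>a\<in>UNIV. g a * e a)"
      by (simp add: right_integral_pairing_comul[OF assms] sum_distrib_left mult_ac)
    finally show ?thesis .
  qed
  have "lam' b = (\<Sum>a\<in>UNIV. g a * e a) * (\<Sum>a\<in>UNIV. u a * antipode_pairing lam a b)"
    by (subst rep, subst g) (simp add: sum_distrib_left mult_ac)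
  then show ?thesis
    by (simp add: antipode_pairing_unit)
qed

lemma right_integral_unique:
  assumes "is_right_integral lam" and "lam z \<noteq> 0" and "is_right_integral lam'"
  obtains \<kappa> where "lam' = (\<lambda>q. \<kappa> * lam q)"
proof -
  obtain g where "lam' = (\<lambda>b. \<Sum>a\<in>UNIV. g a * antipode_pairing lam a b)"
    using surjD[OF antipode_pairing_surj[OF assms(1,2)]] by blast
  then have "lam' b = (\<Sum>a\<in>UNIV. g a * e a) * lam b" for b
    using right_integral_eq_scaled[OF assms] by metis
  then show ?thesis
    using that by fastforce
qed

end

theorem lemma2p4:
  fixes H :: "('i::finite, 'k::field_char_0) hopf_data"
    and A C :: "('i \<Rightarrow> 'k) set"
    and a b :: "'i \<Rightarrow> 'k"
  assumes alg_closed: "\<forall>p :: 'k poly. degree p > 0 \<longrightarrow> (\<exists>x. poly p x = 0)"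
    and hopf: "is_hopf H"
    and subA: "hopf_subalgebra H A"
    and subC: "subcoalgebra H C"
    and inter: "A \<inter> C = {(\<lambda>i. 0)}"
    and sum: "\<forall>x. \<exists>y\<in>A. \<exists>z\<in>C. x = vadd y z"
    and distH: "dist_grouplike H UNIV a"
    and distA: "dist_grouplike H A b"
  shows "a = b"
proof -
  interpret hopf H
    by (rule hopf.intro) (rule hopf)
  obtain lam where lam: "right_integral H UNIV lam"
    and a: "\<And>h. id_fun lam (hcomul H h) = vscale (fval lam h) a"
    using distH by (auto simp: dist_grouplike_def)
  obtain mu where mu: "right_integral H A mu"
    and b: "\<And>h. h \<in> A \<Longrightarrow> id_fun mu (hcomul H h) = vscale (fval mu h) b"
    using distA by (auto simp: dist_grouplike_def)
  obtain lam' where agree: "\<And>y. y \<in> A \<Longrightarrow> fval lam' y = fval mu y"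
    and vanish: "\<And>z. z \<in> C \<Longrightarrow> fval lam' z = 0"
    using direct_sum_functional subA subC inter sum
    unfolding hopf_subalgebra_def subcoalgebra_def by metis
  have integral': "fun_id lam' (hcomul H h) = vscale (fval lam' h) (hone H)"
    and b': "id_fun lam' (hcomul H h) = vscale (fval lam' h) b" for h
    using right_integral_extension[OF _ _ sum agree vanish] subA subC mu b
    by (auto simp: hopf_subalgebra_def subcoalgebra_def right_integral_def)
  obtain z where z: "lam z \<noteq> 0"
    using lam fval_nonzero_imp_nonzero by (metis right_integral_def)
  have "is_right_integral lam" "is_right_integral lam'"
    using lam integral' by (auto intro!: is_right_integralI simp: right_integral_def)
  then obtain \<kappa> where \<kappa>: "lam' = (\<lambda>q. \<kappa> * lam q)"
    using right_integral_unique z by blast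
  moreover have "\<kappa> \<noteq> 0"
    using mu agree by (auto simp: right_integral_def \<kappa> fval_def)
  ultimately show "a = b"
    using distinguished_element_scale_invariant[of lam "bvec z" \<kappa> "hcomul H (bvec z)" a b] z a b'
    by simp
qed

end
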